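(* Assume there exists a measurable cardinal. Then in every mean-payoff game with limited-observation $G$, either Eve has a winning observation-based strategy or Adam has a winning observation-based strategy.
   Context: A mean-payoff game (MPG) with partial-observation is a tuple $G=\langle Q,q_I,\Sigma,\Delta,w,Obs\rangle$ where $Q$ is a finite set of states, $q_I\in Q$, $\Sigma$ is a finite set of actions, $\Delta\subseteq Q\times\Sigma\times Q$ is total (for every $(q,\sigma)$ there is $q'$ with $(q,\sigma,q')\in\Delta$), $w:\Delta\to\mathbb{Z}$, and $Obs$ is a partition of $Q$. For $s\subseteq Q$, $\mathrm{post}_\sigma(s)=\{q':\exists q\in s,(q,\sigma,q')\in\Delta\}$. $G$ is an MPG with limited-observation if moreover $\{q_I\}\in Obs$ and for each $o\in Obs$, $\sigma\in\Sigma$, the set $\mathrm{post}_\sigma(o)$ is a union of elements of $Obs$. An abstract path is a sequence $o_0\sigma_0o_1\ldots$ with $o_i\in Obs$, $\sigma_i\in\Sigma$ such that for each $i$ there are $q\in o_i,q'\in o_{i+1}$ with $(q,\sigma_i,q')\in\Delta$; $\gamma(\psi)$ denotes the set of concrete paths $q_0\sigma_0q_1\ldots$ with $q_i\in o_i$ and $(q_i,\sigma_i,q_{i+1})\in\Delta$. A play is an infinite abstract path starting at the observation containing $q_I$; $\mathrm{Prefs}(G)$ is the set of its finite prefixes ending in an observation. For a concrete path $\pi$, $w(\pi[..n])=\sum_{i<n}w(q_i,\sigma_i,q_{i+1})$ and $\underline{MP}(\pi)=\liminf_{n}\frac1n w(\pi[..n])$. A play $\psi$ is winning for Eve if $\underline{MP}(\pi)\ge0$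 for all $\pi\in\gamma(\psi)$, and winning for Adam otherwise. An observation-based strategy for Eve is $\lambda_\exists:\mathrm{Prefs}(G)\to\Sigma$; a play is consistent with it if $\sigma_i=\lambda_\exists(o_0\sigma_0\ldots o_i)$ for all $i$. An observation-based strategy for Adam is $\lambda_\forall:\mathrm{Prefs}(G)\times\Sigma\to Obs$ with $\lambda_\forall(o_0\sigma_0\ldots o_n,\sigma)\cap\mathrm{post}_\sigma(o_n)\neq\emptyset$; a play is consistent with it if $\lambda_\forall(o_0\sigma_0\ldots o_i,\sigma_i)=o_{i+1}$ for all $i$. A strategy is winning for a player if every play consistent with it is winning for that player. *)

theory Defs
  imports "HOL-Library.Equipollence" "HOL-Library.Disjoint_Sets"
    "HOL-Library.Liminf_Limsup" "HOL-Library.Extended_Real" "HOL-Library.Countable_Set"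
begin

definition ultrafilter_on :: "'u set \<Rightarrow> 'u set set \<Rightarrow> bool" where
  "ultrafilter_on X U \<longleftrightarrow>
     U \<subseteq> Pow X \<and> X \<in> U \<and> {} \<notin> U \<and>
     (\<forall>A B. A \<in> U \<and> B \<in> U \<longrightarrow> A \<inter> B \<in> U) \<and>
     (\<forall>A B. A \<in> U \<and> A \<subseteq> B \<and> B \<subseteq> X \<longrightarrow> B \<in> U) \<and>
     (\<forall>A. A \<subseteq> X \<longrightarrow> A \<in> U \<or> X - A \<in> U)"

definition measurable_cardinal :: "'u set \<Rightarrow> bool" where
  "measurable_cardinal X \<longleftrightarrow> uncountable X \<and>
     (\<exists>U. ultrafilter_on X U \<and> (\<forall>x\<in>X. {x} \<notin> U) \<and>
          (\<forall>F. F \<subseteq> U \<and> F \<noteq> {} \<and> F \<prec> X \<longrightarrow> \<Inter>F \<in> U))"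

definition post :: "('q \<times> 'a \<times> 'q) set \<Rightarrow> 'a \<Rightarrow> 'q set \<Rightarrow> 'q set" where
  "post Delta a s = {q'. \<exists>q\<in>s. (q, a, q') \<in> Delta}"

definition MPG_partial :: "'q set \<Rightarrow> 'q \<Rightarrow> 'a set \<Rightarrow> ('q \<times> 'a \<times> 'q) set \<Rightarrow> 'q set set \<Rightarrow> bool" where
  "MPG_partial Q qI Sig Delta Obs \<longleftrightarrow>
     finite Q \<and> qI \<in> Q \<and> finite Sig \<and> Delta \<subseteq> Q \<times> Sig \<times> Q \<and>
     (\<forall>q\<in>Q. \<forall>a\<in>Sig. \<exists>q'. (q, a, q') \<in> Delta) \<and>
     partition_on Q Obs"

definition MPG_limited :: "'q set \<Rightarrow> 'q \<Rightarrow> 'a set \<Rightarrow> ('q \<times> 'a \<times> 'q) set \<Rightarrow> 'q set set \<Rightarrow> bool" where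
  "MPG_limited Q qI Sig Delta Obs \<longleftrightarrow>
     MPG_partial Q qI Sig Delta Obs \<and> {qI} \<in> Obs \<and>
     (\<forall>ob\<in>Obs. \<forall>a\<in>Sig. \<exists>S. S \<subseteq> Obs \<and> post Delta a ob = \<Union>S)"

definition abstract_path :: "('q \<times> 'a \<times> 'q) set \<Rightarrow> 'q set set \<Rightarrow> (nat \<Rightarrow> 'q set) \<Rightarrow> (nat \<Rightarrow> 'a) \<Rightarrow> bool" where
  "abstract_path Delta Obs obs act \<longleftrightarrow>
     (\<forall>i. obs i \<in> Obs) \<and>
     (\<forall>i. \<exists>q\<in>obs i. \<exists>q'\<in>obs (Suc i). (q, act i, q') \<in> Delta)"

definition is_play :: "'q \<Rightarrow> ('q \<times> 'a \<times> 'q) set \<Rightarrow> 'q set set \<Rightarrow> (nat \<Rightarrow> 'q set) \<Rightarrow> (nat \<Rightarrow> 'a) \<Rightarrow> bool" where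
  "is_play qI Delta Obs obs act \<longleftrightarrow> abstract_path Delta Obs obs act \<and> qI \<in> obs 0"

text \<open>Finite prefixes o_0 a_0 ... o_n of plays, represented as the list of
  observations [o_0,...,o_n] and the list of actions [a_0,...,a_(n-1)].\<close>

definition Prefs :: "'q \<Rightarrow> ('q \<times> 'a \<times> 'q) set \<Rightarrow> 'q set set \<Rightarrow> ('q set list \<times> 'a list) set" where
  "Prefs qI Delta Obs = {(map obs [0..<Suc n], map act [0..<n]) | obs act n.
      is_play qI Delta Obs obs act}"

definition concretisation :: "('q \<times> 'a \<times> 'q) set \<Rightarrow> (nat \<Rightarrow> 'q set) \<Rightarrow> (nat \<Rightarrow> 'a) \<Rightarrow> (nat \<Rightarrow> 'q) \<Rightarrow> bool" where
  "concretisation Delta obs act qs \<longleftrightarrow>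
     (\<forall>i. qs i \<in> obs i) \<and> (\<forall>i. (qs i, act i, qs (Suc i)) \<in> Delta)"

definition path_weight :: "('q \<times> 'a \<times> 'q \<Rightarrow> int) \<Rightarrow> (nat \<Rightarrow> 'q) \<Rightarrow> (nat \<Rightarrow> 'a) \<Rightarrow> nat \<Rightarrow> int" where
  "path_weight w qs act n = (\<Sum>i<n. w (qs i, act i, qs (Suc i)))"

definition lower_MP :: "('q \<times> 'a \<times> 'q \<Rightarrow> int) \<Rightarrow> (nat \<Rightarrow> 'q) \<Rightarrow> (nat \<Rightarrow> 'a) \<Rightarrow> ereal" where
  "lower_MP w qs act = liminf (\<lambda>n. ereal (real_of_int (path_weight w qs act n) / real n))"

definition winning_Eve_play :: "('q \<times> 'a \<times> 'q) set \<Rightarrow> ('q \<times> 'a \<times> 'q \<Rightarrow> int) \<Rightarrow> (nat \<Rightarrow> 'q set) \<Rightarrow> (nat \<Rightarrow> 'a) \<Rightarrow> bool" where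
  "winning_Eve_play Delta w obs act \<longleftrightarrow>
     (\<forall>qs. concretisation Delta obs act qs \<longrightarrow> lower_MP w qs act \<ge> 0)"

definition eve_strategy :: "'q \<Rightarrow> 'a set \<Rightarrow> ('q \<times> 'a \<times> 'q) set \<Rightarrow> 'q set set \<Rightarrow> ('q set list \<Rightarrow> 'a list \<Rightarrow> 'a) \<Rightarrow> bool" where
  "eve_strategy qI Sig Delta Obs lE \<longleftrightarrow>
     (\<forall>(os, as) \<in> Prefs qI Delta Obs. lE os as \<in> Sig)"

definition adam_strategy :: "'q \<Rightarrow> 'a set \<Rightarrow> ('q \<times> 'a \<times> 'q) set \<Rightarrow> 'q set set \<Rightarrow> ('q set list \<Rightarrow> 'a list \<Rightarrow> 'a \<Rightarrow> 'q set) \<Rightarrow> bool" where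
  "adam_strategy qI Sig Delta Obs lA \<longleftrightarrow>
     (\<forall>(os, as) \<in> Prefs qI Delta Obs. \<forall>a\<in>Sig.
        lA os as a \<in> Obs \<and> lA os as a \<inter> post Delta a (last os) \<noteq> {})"

definition consistent_Eve :: "('q set list \<Rightarrow> 'a list \<Rightarrow> 'a) \<Rightarrow> (nat \<Rightarrow> 'q set) \<Rightarrow> (nat \<Rightarrow> 'a) \<Rightarrow> bool" where
  "consistent_Eve lE obs act \<longleftrightarrow>
     (\<forall>i. act i = lE (map obs [0..<Suc i]) (map act [0..<i]))"

definition consistent_Adam :: "('q set list \<Rightarrow> 'a list \<Rightarrow> 'a \<Rightarrow> 'q set) \<Rightarrow> (nat \<Rightarrow> 'q set) \<Rightarrow> (nat \<Rightarrow> 'a) \<Rightarrow> bool" where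
  "consistent_Adam lA obs act \<longleftrightarrow>
     (\<forall>i. lA (map obs [0..<Suc i]) (map act [0..<i]) (act i) = obs (Suc i))"

definition eve_wins :: "'q \<Rightarrow> 'a set \<Rightarrow> ('q \<times> 'a \<times> 'q) set \<Rightarrow> ('q \<times> 'a \<times> 'q \<Rightarrow> int) \<Rightarrow> 'q set set \<Rightarrow> bool" where
  "eve_wins qI Sig Delta w Obs \<longleftrightarrow>
     (\<exists>lE. eve_strategy qI Sig Delta Obs lE \<and>
        (\<forall>obs act. is_play qI Delta Obs obs act \<and> consistent_Eve lE obs act \<longrightarrow>
           winning_Eve_play Delta w obs act))"

definition adam_wins :: "'q \<Rightarrow> 'a set \<Rightarrow> ('q \<times> 'a \<times> 'q) set \<Rightarrow> ('q \<times> 'a \<times> 'q \<Rightarrow> int) \<Rightarrow> 'q set set \<Rightarrow> bool" where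
  "adam_wins qI Sig Delta w Obs \<longleftrightarrow>
     (\<exists>lA. adam_strategy qI Sig Delta Obs lA \<and>
        (\<forall>obs act. is_play qI Delta Obs obs act \<and> consistent_Adam lA obs act \<longrightarrow>
           \<not> winning_Eve_play Delta w obs act))"

end

theory Submission
  imports Defs
begin

text \<open>Martin's measurable-cardinal argument. Eve loses a play \<psi> exactly when the tree of
  loss witnesses -- finite block decompositions of concrete paths in \<gamma>(\<psi>) along which
  the average weight drops below a fixed -1/k at every block end -- has an infinite
  branch, i.e. when its Kleene-Brouwer order is ill-founded. In an auxiliary game Eve
  plays her actions and, in addition, labels the witnesses seen so far by elements of
  the measurable cardinal \<kappa>, keeping the labelling Kleene-Brouwer monotone. For Adam
  this is an open game, hence determined. A winning auxiliary strategy for Eve yields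
  a well-founded labelling, so Eve wins the original game. Against a winning auxiliary
  strategy for Adam, Rowbottom's theorem for a normal measure on \<kappa> gives a large set
  H on which Adam's replies depend only on the number of labels; playing them wins the
  original game, because a play won by Eve would let her label its countable
  well-founded tree monotonically inside H and so survive forever.\<close>

section \<open>Measurable cardinals\<close>

text \<open>K is ordered by its initial well-order card_of K, whose proper initial segments have
  cardinality below |K|.\<close>

definition wo_less :: "'u set \<Rightarrow> 'u \<Rightarrow> 'u \<Rightarrow> bool" where
  "wo_less K a b \<longleftrightarrow> (a, b) \<in> (card_of K) \<and> a \<noteq> b"

definition wo_below :: "'u set \<Rightarrow> 'u \<Rightarrow> 'u set" where "wo_below K a = {b. wo_less K b a}"

locale measurable_ultrafilter =
  fixes K :: "'u set" and U :: "'u set set"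
  assumes unc: "uncountable K"
    and uf: "ultrafilter_on K U"
    and nonpr: "\<forall>x\<in>K. {x} \<notin> U"
    and compl: "\<forall>F. F \<subseteq> U \<and> F \<noteq> {} \<and> F \<prec> K \<longrightarrow> \<Inter>F \<in> U"
begin

abbreviation lt :: "'u \<Rightarrow> 'u \<Rightarrow> bool" where "lt \<equiv> wo_less K"
abbreviation seg :: "'u \<Rightarrow> 'u set" where "seg \<equiv> wo_below K"
lemmas lt_def = wo_less_def[of K]
lemmas seg_def = wo_below_def[of K]

lemma well_order_K: "well_order_on K (card_of K)"
  by (rule card_of_well_order_on)

lemma lt_in_K: "lt a b \<Longrightarrow> a \<in> K \<and> b \<in> K"
  using well_order_K unfolding lt_def
  by (metis FieldI1 FieldI2 Field_card_of)

lemma lt_irrefl: "\<not> lt a a" by (simp add: lt_def)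

lemma lt_trans: "lt a b \<Longrightarrow> lt b c \<Longrightarrow> lt a c"
  using well_order_K unfolding lt_def well_order_on_def linear_order_on_def partial_order_on_def
    preorder_on_def antisym_def trans_def
  by blast

lemma lt_total: "a \<in> K \<Longrightarrow> b \<in> K \<Longrightarrow> a = b \<or> lt a b \<or> lt b a"
  using well_order_K unfolding lt_def well_order_on_def linear_order_on_def total_on_def
  by blast

lemma lt_wf: "wf {(a, b). lt a b}"
proof -
  have "wf ( (card_of K) - Id)" using well_order_K unfolding well_order_on_def by blast
  moreover have "{(a, b). lt a b} = (card_of K) - Id" unfolding lt_def by auto
  ultimately show ?thesis by simp
qed

lemma seg_underS: "seg a = underS (card_of K) a"
  unfolding seg_def underS_def lt_def by auto

lemma seg_lesspoll: assumes "a \<in> K" shows "seg a \<prec> K"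
proof -
  have "(card_of (underS (card_of K) a), card_of K) \<in> ordLess"
    using card_of_underS[OF card_of_Card_order] assms by (simp add: Field_card_of)
  hence 1: "\<not>(\<exists>f. inj_on f K \<and> f ` K \<subseteq> underS (card_of K) a)" using card_of_ordLess by blast
  have 2: "underS (card_of K) a \<subseteq> K"
    using Field_card_of[of K] underS_Field[of _ "card_of K" a] by blast
  show ?thesis unfolding lesspoll_def seg_underS
  proof
    show "underS (card_of K) a \<lesssim> K" using 2 by (rule subset_imp_lepoll)
    show "\<not> underS (card_of K) a \<approx> K"
    proof
      assume "underS (card_of K) a \<approx> K"
      then obtain f where "bij_betw f K (underS (card_of K) a)"
        by (meson eqpoll_def eqpoll_sym)
      thus False using 1 by (metis bij_betw_def order_refl)
    qed
  qed
qed

lemma countable_lesspoll_K: "countable S \<Longrightarrow> S \<prec> K"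
proof -
  assume c: "countable S"
  have "S \<lesssim> K"
  proof -
    have "infinite K" using unc by (metis countable_finite)
    hence "(UNIV::nat set) \<lesssim> K" using infinite_le_lepoll by blast
    moreover have "S \<lesssim> (UNIV::nat set)" using c
      by (metis countable_def lepoll_def' Pi_I UNIV_I)
    ultimately show ?thesis using lepoll_trans by blast
  qed
  moreover have "\<not> S \<approx> K"
  proof
    assume "S \<approx> K"
    hence "K \<lesssim> S" by (simp add: eqpoll_imp_lepoll eqpoll_sym)
    thus False using c unc countable_lepoll by blast
  qed
  ultimately show ?thesis by (simp add: lesspoll_def)
qed

lemmas U_ultrafilter = uf[unfolded ultrafilter_on_def]
lemma U_sub: "A \<in> U \<Longrightarrow> A \<subseteq> K" using U_ultrafilter[THEN conjunct1] by auto
lemma U_K: "K \<in> U" using U_ultrafilter by (elim conjE)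
lemma U_empty: "{} \<notin> U" using U_ultrafilter by (elim conjE)
lemma U_int: "A \<in> U \<Longrightarrow> B \<in> U \<Longrightarrow> A \<inter> B \<in> U"
  using U_ultrafilter by (elim conjE) (erule allE[of _ A], erule allE[of _ B], simp)
lemma U_mono: "A \<in> U \<Longrightarrow> A \<subseteq> B \<Longrightarrow> B \<subseteq> K \<Longrightarrow> B \<in> U"
  using U_ultrafilter by (elim conjE) (erule allE[of _ A], erule allE[of _ B], simp)
lemma U_ultra: "A \<subseteq> K \<Longrightarrow> A \<in> U \<or> K - A \<in> U"
  using U_ultrafilter by (elim conjE) (erule allE[of _ A], simp)
lemma U_ne: "A \<in> U \<Longrightarrow> \<exists>x. x \<in> A" using U_empty by (metis ex_in_conv)

lemma small_notin_U: assumes "S \<subseteq> K" "S \<prec> K" shows "S \<notin> U"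
proof
  assume SU: "S \<in> U"
  hence Sne: "S \<noteq> {}" using U_empty by auto
  let ?F = "(\<lambda>x. K - {x}) ` S"
  have FU: "?F \<subseteq> U"
  proof
    fix A assume "A \<in> ?F"
    then obtain x where x: "x \<in> S" "A = K - {x}" by auto
    have xK: "x \<in> K" using x(1) assms(1) by auto
    have "{x} \<notin> U" using nonpr xK by auto
    moreover have "{x} \<subseteq> K" using xK by auto
    ultimately show "A \<in> U" using U_ultra[of "{x}"] x(2) by auto
  qed
  have Fne: "?F \<noteq> {}" using Sne by auto
  have Fl: "?F \<prec> K" by (rule lesspoll_trans1[OF image_lepoll assms(2)])
  have "\<Inter>?F \<in> U" by (rule compl[rule_format, OF conjI[OF FU conjI[OF Fne Fl]]])
  moreover have "\<Inter>?F = K - S" using Sne by auto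
  ultimately have KS: "K - S \<in> U" by simp
  have "S \<inter> (K - S) = {}" by auto
  thus False using U_int[OF SU KS] U_empty by simp
qed

lemma U_countable_Inter:
  assumes "countable F" "F \<subseteq> U" "F \<noteq> {}" shows "\<Inter>F \<in> U"
  by (rule compl[rule_format, OF conjI[OF assms(2) conjI[OF assms(3) countable_lesspoll_K[OF assms(1)]]]])

lemma seg_sub: "seg a \<subseteq> K" unfolding seg_def using lt_in_K by auto

lemma seg_notin_U: "a \<in> K \<Longrightarrow> seg a \<notin> U"
  by (rule small_notin_U[OF seg_sub seg_lesspoll])

lemma U_union: assumes "A \<subseteq> K" "B \<subseteq> K" "A \<notin> U" "B \<notin> U" shows "A \<union> B \<notin> U"
proof
  assume AB: "A \<union> B \<in> U"
  have "K - A \<in> U" using U_ultra[OF assms(1)] assms(3) by auto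
  moreover have "K - B \<in> U" using U_ultra[OF assms(2)] assms(4) by auto
  ultimately have "(K - A) \<inter> (K - B) \<in> U" by (rule U_int)
  hence "(A \<union> B) \<inter> ((K - A) \<inter> (K - B)) \<in> U" by (rule U_int[OF AB])
  moreover have "(A \<union> B) \<inter> ((K - A) \<inter> (K - B)) = {}" by auto
  ultimately show False using U_empty by simp
qed

lemma seg_insert_notin_U: assumes "a \<in> K" shows "seg a \<union> {a} \<notin> U"
proof -
  have "{a} \<notin> U" using nonpr assms by auto
  thus ?thesis using U_union[OF seg_sub _ seg_notin_U[OF assms], of "{a}"] assms by blast
qed

lemma above_in_U: assumes "a \<in> K" shows "{b\<in>K. lt a b} \<in> U"
proof -
  have "K - (seg a \<union> {a}) \<in> U" using U_ultra[of "seg a \<union> {a}"] seg_insert_notin_U[OF assms]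
      seg_sub assms by auto
  moreover have "K - (seg a \<union> {a}) \<subseteq> {b\<in>K. lt a b}"
    using lt_total[OF assms] unfolding seg_def by auto
  ultimately show ?thesis using U_mono[of "K - (seg a \<union> {a})" "{b\<in>K. lt a b}"] by simp
qed

lemma exists_above: "a \<in> K \<Longrightarrow> \<exists>b\<in>K. lt a b"
  using U_ne[OF above_in_U] by auto

lemma U_finite_partition:
  assumes "finite C" "B \<in> U" "\<forall>x\<in>B. g x \<in> C"
  shows "\<exists>c\<in>C. {x\<in>B. g x = c} \<in> U"
  using assms
proof (induction C arbitrary: B rule: finite_induct)
  case empty
  then show ?case using U_ne by auto
next
  case (insert c C)
  show ?case
  proof (cases "{x\<in>B. g x = c} \<in> U")
    case True then show ?thesis by auto
  next
    case False
    have Bsub: "B \<subseteq> K" using U_sub insert.prems(1) by auto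
    have "K - {x\<in>B. g x = c} \<in> U" using U_ultra[of "{x\<in>B. g x = c}"] False Bsub by auto
    hence "B \<inter> (K - {x\<in>B. g x = c}) \<in> U" by (rule U_int[OF insert.prems(1)])
    moreover have "B \<inter> (K - {x\<in>B. g x = c}) = {x\<in>B. g x \<noteq> c}" using Bsub by auto
    ultimately have B': "{x\<in>B. g x \<noteq> c} \<in> U" by simp
    have "\<forall>x\<in>{x\<in>B. g x \<noteq> c}. g x \<in> C" using insert.prems(2) by auto
    then obtain c' where "c' \<in> C" "{x\<in>{x\<in>B. g x \<noteq> c}. g x = c'} \<in> U"
      using insert.IH[OF B'] by blast
    moreover have "{x\<in>{x\<in>B. g x \<noteq> c}. g x = c'} \<subseteq> {x\<in>B. g x = c'}" by auto
    moreover have "{x\<in>B. g x = c'} \<subseteq> K" using Bsub by auto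
    ultimately show ?thesis using U_mono[of "{x\<in>{x\<in>B. g x \<noteq> c}. g x = c'}" "{x\<in>B. g x = c'}"] \<open>c' \<in> C\<close> by auto
  qed
qed

lemma bounded_constant_on_U:
  assumes B: "B \<in> U" and a: "a \<in> K" and g: "\<forall>y\<in>B. lt (g y) a"
  shows "\<exists>b\<in>K. {y\<in>K. g y = b} \<in> U"
proof (rule ccontr)
  assume nc: "\<not> (\<exists>b\<in>K. {y\<in>K. g y = b} \<in> U)"
  let ?F = "(\<lambda>b. K - {y\<in>K. g y = b}) ` seg a"
  obtain y0 where "y0 \<in> B" using U_ne[OF B] by blast
  hence segne: "seg a \<noteq> {}" using g unfolding seg_def by auto
  have "?F \<subseteq> U"
  proof
    fix X assume "X \<in> ?F"
    then obtain b where b: "b \<in> seg a" "X = K - {y\<in>K. g y = b}" by auto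
    have "b \<in> K" using b(1) seg_sub by auto
    hence "{y\<in>K. g y = b} \<notin> U" using nc by auto
    thus "X \<in> U" using U_ultra[of "{y\<in>K. g y = b}"] b(2) by auto
  qed
  moreover have "?F \<noteq> {}" using segne by auto
  moreover have "?F \<prec> K" using lesspoll_trans1[OF image_lepoll seg_lesspoll[OF a]] .
  ultimately have "\<Inter>?F \<in> U" using compl by blast
  then obtain y where y: "y \<in> \<Inter>?F" "y \<in> B" using U_int[OF _ B] U_ne by blast
  have "g y \<in> seg a" using y(2) g unfolding seg_def by auto
  moreover have "y \<in> K" using y(2) U_sub[OF B] by auto
  ultimately show False using y(1) segne by auto
qed

lemma wf_countable_embeds:
  fixes N :: "'b set" and R :: "('b \<times> 'b) set"
  assumes H: "H \<in> U" and N: "countable N" and R: "wf R" "R \<subseteq> N \<times> N"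
  shows "\<exists>h. (\<forall>x. h x \<in> H) \<and> (\<forall>x y. (x, y) \<in> R \<longrightarrow> lt (h x) (h y))"
proof -
  define F where "F f x = (SOME b. b \<in> H \<and> (\<forall>y. (y, x) \<in> R \<longrightarrow> lt (f y) b))" for f :: "'b \<Rightarrow> 'u" and x :: 'b
  define h where "h = wfrec R F"
  have hx: "h x = (SOME b. b \<in> H \<and> (\<forall>y. (y, x) \<in> R \<longrightarrow> lt (h y) b))" for x
  proof -
    have "h x = F (cut h R x) x" unfolding h_def by (rule wfrec[OF R(1)])
    also have "\<dots> = (SOME b. b \<in> H \<and> (\<forall>y. (y, x) \<in> R \<longrightarrow> lt (h y) b))"
      unfolding F_def by (rule arg_cong[where f=Eps]) (auto simp: cut_apply fun_eq_iff)
    finally show ?thesis .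
  qed
  have HK: "H \<subseteq> K" using U_sub H by auto
  have main: "h x \<in> H \<and> (\<forall>y. (y, x) \<in> R \<longrightarrow> lt (h y) (h x))" for x
  proof (induction x rule: wf_induct_rule[OF R(1)])
    case (1 x)
    let ?P = "{y. (y, x) \<in> R}"
    have "?P \<subseteq> N" using R(2) by auto
    hence Pc: "countable ?P" using countable_subset[OF _ N] by blast
    let ?F = "insert H ((\<lambda>y. {b\<in>K. lt (h y) b}) ` ?P)"
    have Fc: "countable ?F" using Pc by auto
    have FU: "?F \<subseteq> U"
    proof
      fix X assume "X \<in> ?F"
      then consider "X = H" | y where "(y, x) \<in> R" "X = {b\<in>K. lt (h y) b}" by auto
      then show "X \<in> U"
      proof cases
        case 1 then show ?thesis using H by simp
      next
        case 2
        have "h y \<in> K" using "1.IH"[OF 2(1)] HK by auto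
        then show ?thesis using above_in_U 2(2) by simp
      qed
    qed
    have "\<Inter>?F \<in> U" by (rule U_countable_Inter[OF Fc FU]) simp
    then obtain b where b: "b \<in> \<Inter>?F" using U_ne by blast
    hence ex: "b \<in> H \<and> (\<forall>y. (y, x) \<in> R \<longrightarrow> lt (h y) b)" by auto
    show ?case unfolding hx[of x] by (rule someI[of _ b], rule ex)
  qed
  show ?thesis using main by blast
qed

subsection \<open>Normal measures\<close>

text \<open>The classical construction: push U forward along the least function that is unbounded
  modulo U in the (well-founded) ultrapower order.\<close>

definition ult_less :: "(('u \<Rightarrow> 'u) \<times> ('u \<Rightarrow> 'u)) set" where
  "ult_less = {(g, f). g \<in> K \<rightarrow> K \<and> f \<in> K \<rightarrow> K \<and> {x\<in>K. lt (g x) (f x)} \<in> U}"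

lemma wf_ult_less: "wf ult_less"
proof -
  have "\<nexists>F. \<forall>i. (F (Suc i), F i) \<in> ult_less"
  proof
    assume "\<exists>F. \<forall>i. (F (Suc i), F i) \<in> ult_less"
    then obtain F where F: "\<forall>i. (F (Suc i), F i) \<in> ult_less" by blast
    define A where "A i = {x\<in>K. lt (F (Suc i) x) (F i x)}" for i
    have "\<forall>i. A i \<in> U" using F unfolding A_def ult_less_def by auto
    hence "range A \<subseteq> U" by auto
    hence "\<Inter>(range A) \<in> U" using U_countable_Inter[of "range A"] by auto
    then obtain x where x: "x \<in> \<Inter>(range A)" using U_ne by blast
    have "\<forall>i. ((\<lambda>i. F i x) (Suc i), (\<lambda>i. F i x) i) \<in> {(a, b). lt a b}"
      using x unfolding A_def by auto
    thus False using lt_wf unfolding wf_iff_no_infinite_down_chain by auto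
  qed
  thus ?thesis unfolding wf_iff_no_infinite_down_chain .
qed

definition unbounded_mod_U :: "('u \<Rightarrow> 'u) \<Rightarrow> bool" where
  "unbounded_mod_U f \<longleftrightarrow> f \<in> K \<rightarrow> K \<and> (\<forall>a\<in>K. {x\<in>K. lt (f x) a} \<notin> U)"

lemma unbounded_mod_U_id: "unbounded_mod_U id"
proof -
  have "\<And>a. a \<in> K \<Longrightarrow> {x\<in>K. lt x a} = seg a" unfolding seg_def using lt_in_K by auto
  thus ?thesis unfolding unbounded_mod_U_def using seg_notin_U by auto
qed

definition least_unbounded :: "'u \<Rightarrow> 'u" where
  "least_unbounded = (SOME f. unbounded_mod_U f \<and> (\<forall>g. (g, f) \<in> ult_less \<longrightarrow> \<not> unbounded_mod_U g))"

lemma least_unbounded_minimal: "unbounded_mod_U least_unbounded \<and> (\<forall>g. (g, least_unbounded) \<in> ult_less \<longrightarrow> \<not> unbounded_mod_U g)"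
proof -
  obtain z where "z \<in> {f. unbounded_mod_U f}" "\<And>y. (y, z) \<in> ult_less \<Longrightarrow> y \<notin> {f. unbounded_mod_U f}"
    using wfE_min[OF wf_ult_less, of id "{f. unbounded_mod_U f}"] unbounded_mod_U_id by blast
  hence "\<exists>f. unbounded_mod_U f \<and> (\<forall>g. (g, f) \<in> ult_less \<longrightarrow> \<not> unbounded_mod_U g)" by auto
  thus ?thesis unfolding least_unbounded_def by (rule someI_ex)
qed

lemma least_unbounded_in_K: "x \<in> K \<Longrightarrow> least_unbounded x \<in> K" using least_unbounded_minimal unfolding unbounded_mod_U_def by auto

definition normal_U :: "'u set set" where "normal_U = {A. A \<subseteq> K \<and> {x\<in>K. least_unbounded x \<in> A} \<in> U}"

lemma normal_ultrafilter_on: "ultrafilter_on K normal_U"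
  unfolding ultrafilter_on_def
proof (intro conjI allI impI)
  show "normal_U \<subseteq> Pow K" unfolding normal_U_def by auto
  have "{x\<in>K. least_unbounded x \<in> K} = K" using least_unbounded_in_K by auto
  thus "K \<in> normal_U" unfolding normal_U_def using U_K by auto
  show "{} \<notin> normal_U" unfolding normal_U_def using U_empty by auto
next
  fix A B assume "A \<in> normal_U \<and> B \<in> normal_U"
  hence "{x\<in>K. least_unbounded x \<in> A} \<inter> {x\<in>K. least_unbounded x \<in> B} \<in> U" "A \<subseteq> K" unfolding normal_U_def using U_int by auto
  moreover have "{x\<in>K. least_unbounded x \<in> A} \<inter> {x\<in>K. least_unbounded x \<in> B} = {x\<in>K. least_unbounded x \<in> A \<inter> B}" by auto
  ultimately show "A \<inter> B \<in> normal_U" unfolding normal_U_def by auto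
next
  fix A B assume "A \<in> normal_U \<and> A \<subseteq> B \<and> B \<subseteq> K"
  moreover have "A \<subseteq> B \<Longrightarrow> {x\<in>K. least_unbounded x \<in> A} \<subseteq> {x\<in>K. least_unbounded x \<in> B}" by auto
  ultimately show "B \<in> normal_U" unfolding normal_U_def using U_mono[of "{x\<in>K. least_unbounded x \<in> A}" "{x\<in>K. least_unbounded x \<in> B}"] by auto
next
  fix A assume A: "A \<subseteq> K"
  have "{x\<in>K. least_unbounded x \<in> A} \<in> U \<or> K - {x\<in>K. least_unbounded x \<in> A} \<in> U" using U_ultra by auto
  moreover have "K - {x\<in>K. least_unbounded x \<in> A} = {x\<in>K. least_unbounded x \<in> K - A}" using least_unbounded_in_K by auto
  ultimately show "A \<in> normal_U \<or> K - A \<in> normal_U" unfolding normal_U_def using A by auto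
qed

lemma normal_nonprincipal: "\<forall>x\<in>K. {x} \<notin> normal_U"
proof (intro ballI notI)
  fix a assume aK: "a \<in> K" and "{a} \<in> normal_U"
  hence P: "{x\<in>K. least_unbounded x = a} \<in> U" unfolding normal_U_def by auto
  obtain b where b: "b \<in> K" "lt a b" using exists_above[OF aK] by auto
  have "{x\<in>K. least_unbounded x = a} \<subseteq> {x\<in>K. lt (least_unbounded x) b}" using b by auto
  hence "{x\<in>K. lt (least_unbounded x) b} \<in> U" using U_mono[OF P] by auto
  thus False using least_unbounded_minimal b unfolding unbounded_mod_U_def by auto
qed

lemma normal_complete: "\<forall>F. F \<subseteq> normal_U \<and> F \<noteq> {} \<and> F \<prec> K \<longrightarrow> \<Inter>F \<in> normal_U"
proof (intro allI impI)
  fix F assume F: "F \<subseteq> normal_U \<and> F \<noteq> {} \<and> F \<prec> K"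
  let ?F = "(\<lambda>A. {x\<in>K. least_unbounded x \<in> A}) ` F"
  have 1: "?F \<subseteq> U" using F unfolding normal_U_def by auto
  have 2: "?F \<noteq> {}" using F by auto
  have 3: "?F \<prec> K" using F lesspoll_trans1[OF image_lepoll] by blast
  have "\<Inter>?F \<in> U" by (rule compl[rule_format, OF conjI[OF 1 conjI[OF 2 3]]])
  moreover have "\<Inter>?F = {x\<in>K. least_unbounded x \<in> \<Inter>F}" using F by auto
  moreover have "\<Inter>F \<subseteq> K" using F unfolding normal_U_def by auto
  ultimately show "\<Inter>F \<in> normal_U" unfolding normal_U_def by auto
qed

lemma normal_measurable: "measurable_ultrafilter K normal_U"
  using unc normal_ultrafilter_on normal_nonprincipal normal_complete by (simp add: measurable_ultrafilter_def)

lemma normal_regressive_bounded: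
  assumes A: "A \<in> normal_U" and g: "\<forall>y\<in>A. lt (g y) y"
  shows "\<exists>a\<in>K. {y\<in>A. lt (g y) a} \<in> normal_U"
proof -
  define g' where "g' x = (if least_unbounded x \<in> A then g (least_unbounded x) else least_unbounded x)" for x
  have AK: "A \<subseteq> K" using A unfolding normal_U_def by auto
  have g'K: "g' \<in> K \<rightarrow> K" unfolding g'_def using least_unbounded_in_K g lt_in_K AK by (auto simp: Pi_iff)
  have "{x\<in>K. least_unbounded x \<in> A} \<subseteq> {x\<in>K. lt (g' x) (least_unbounded x)}" unfolding g'_def using g by auto
  hence "{x\<in>K. lt (g' x) (least_unbounded x)} \<in> U" using A unfolding normal_U_def using U_mono by blast
  hence "(g', least_unbounded) \<in> ult_less"
    unfolding ult_less_def using g'K least_unbounded_minimal unfolding unbounded_mod_U_def by auto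
  hence "\<not> unbounded_mod_U g'" using least_unbounded_minimal by auto
  then obtain a where a: "a \<in> K" "{x\<in>K. lt (g' x) a} \<in> U" using g'K unfolding unbounded_mod_U_def by auto
  have "{x\<in>K. lt (g' x) a} \<inter> {x\<in>K. least_unbounded x \<in> A} \<in> U" using a(2) A U_int unfolding normal_U_def by auto
  moreover have "{x\<in>K. lt (g' x) a} \<inter> {x\<in>K. least_unbounded x \<in> A} = {x\<in>K. least_unbounded x \<in> {y\<in>A. lt (g y) a}}"
    unfolding g'_def by auto
  ultimately show ?thesis unfolding normal_U_def using AK a(1) by auto
qed

lemma normal_fixes_regressive:
  assumes A: "A \<in> normal_U" and g: "\<forall>y\<in>A. lt (g y) y"
  shows "\<exists>a\<in>K. {y\<in>K. g y = a} \<in> normal_U"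
proof -
  interpret Un: measurable_ultrafilter K normal_U by (rule normal_measurable)
  obtain a where "a \<in> K" "{y\<in>A. lt (g y) a} \<in> normal_U"
    using normal_regressive_bounded[OF assms] by blast
  then show ?thesis using Un.bounded_constant_on_U[of _ a g] by auto
qed

end

subsection \<open>Rowbottom's theorem\<close>

locale normal_ultrafilter = measurable_ultrafilter +
  assumes normal: "\<forall>A g. A \<in> U \<and> (\<forall>y\<in>A. lt (g y) y) \<longrightarrow> (\<exists>a\<in>K. {y\<in>K. g y = a} \<in> U)"
begin

lemma diagonal_intersection_in_U:
  assumes Hs: "\<forall>a\<in>K. Hs a \<in> U"
  shows "{b\<in>K. \<forall>a. lt a b \<longrightarrow> b \<in> Hs a} \<in> U"
proof (rule ccontr)
  let ?Dl = "{b\<in>K. \<forall>a. lt a b \<longrightarrow> b \<in> Hs a}"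
  assume nd: "?Dl \<notin> U"
  let ?C = "K - ?Dl"
  have CU: "?C \<in> U" using U_ultra[of ?Dl] nd by auto
  define g where "g b = (SOME a. lt a b \<and> b \<notin> Hs a)" for b
  have gC: "lt (g b) b \<and> b \<notin> Hs (g b)" if "b \<in> ?C" for b
  proof -
    have "\<exists>a. lt a b \<and> b \<notin> Hs a" using that by auto
    thus ?thesis unfolding g_def by (rule someI_ex)
  qed
  have "\<forall>y\<in>?C. lt (g y) y" using gC by simp
  from normal[rule_format, OF conjI[OF CU this]] obtain a where a: "a \<in> K" "{y\<in>K. g y = a} \<in> U"
    by blast
  have "{y\<in>K. g y = a} \<inter> ?C \<in> U" using U_int[OF a(2) CU] .
  moreover have "Hs a \<in> U" using Hs a(1) by simp
  ultimately have "({y\<in>K. g y = a} \<inter> ?C) \<inter> Hs a \<in> U" by (rule U_int)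
  then obtain y where y: "y \<in> ({y\<in>K. g y = a} \<inter> ?C) \<inter> Hs a" using U_ne by blast
  hence "y \<in> ?C" by simp
  hence "y \<notin> Hs (g y)" using gC by simp
  moreover have "g y = a" "y \<in> Hs a" using y by auto
  ultimately show False by simp
qed

lemma rowbottom:
  assumes C: "finite C" and c: "\<forall>xs. c xs \<in> C"
  shows "\<exists>H\<in>U. \<exists>col\<in>C. \<forall>xs. length xs = n \<and> sorted_wrt lt xs \<and> set xs \<subseteq> H \<longrightarrow> c xs = col"
  using c
proof (induction n arbitrary: c)
  case 0
  show ?case using U_K 0 by (intro bexI[of _ K] bexI[of _ "c []"]) auto
next
  case (Suc n)
  define P where "P a p \<longleftrightarrow> fst p \<in> U \<and> snd p \<in> C \<and>
     (\<forall>xs. length xs = n \<and> sorted_wrt lt xs \<and> set xs \<subseteq> fst p \<longrightarrow> c (a # xs) = snd p)" for a p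
  have exP: "\<exists>p. P a p" for a
  proof -
    have "\<forall>xs. c (a # xs) \<in> C" using Suc.prems by auto
    from Suc.IH[OF this] obtain H col where "H \<in> U" "col \<in> C"
      "\<forall>xs. length xs = n \<and> sorted_wrt lt xs \<and> set xs \<subseteq> H \<longrightarrow> c (a # xs) = col" by blast
    thus ?thesis unfolding P_def by (intro exI[of _ "(H, col)"]) auto
  qed
  define HH where "HH a = fst (SOME p. P a p)" for a
  define CC where "CC a = snd (SOME p. P a p)" for a
  have PP: "P a (HH a, CC a)" for a unfolding HH_def CC_def using someI_ex[OF exP[of a]] by simp
  have "\<forall>x\<in>K. CC x \<in> C" using PP unfolding P_def by auto
  then obtain col where col: "col \<in> C" "{x\<in>K. CC x = col} \<in> U"
    using U_finite_partition[OF C U_K] by blast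
  have "\<forall>a\<in>K. HH a \<in> U" using PP unfolding P_def by auto
  hence Dl: "{b\<in>K. \<forall>a. lt a b \<longrightarrow> b \<in> HH a} \<in> U" by (rule diagonal_intersection_in_U)
  let ?H = "{x\<in>K. CC x = col} \<inter> {b\<in>K. \<forall>a. lt a b \<longrightarrow> b \<in> HH a}"
  have HU: "?H \<in> U" using U_int[OF col(2) Dl] .
  show ?case
  proof (intro bexI[OF _ HU] bexI[OF _ col(1)] allI impI)
    fix xs assume xs: "length xs = Suc n \<and> sorted_wrt lt xs \<and> set xs \<subseteq> ?H"
    then obtain a ys where xs_eq: "xs = a # ys" by (cases xs) auto
    have a: "CC a = col" using xs xs_eq by auto
    have "set ys \<subseteq> HH a" using xs xs_eq by auto
    moreover have "length ys = n" "sorted_wrt lt ys" using xs xs_eq by auto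
    ultimately have "c (a # ys) = CC a" using PP[of a] unfolding P_def by auto
    thus "c xs = col" using a xs_eq by simp
  qed
qed

lemma rowbottom_countable:
  assumes I: "countable I" and C: "\<forall>i\<in>I. finite (C i) \<and> (\<forall>xs. c i xs \<in> C i)"
  shows "\<exists>H\<in>U. \<forall>i\<in>I. \<forall>n. \<exists>col. \<forall>xs. length xs = n \<and> sorted_wrt lt xs \<and> set xs \<subseteq> H \<longrightarrow> c i xs = col"
proof -
  define P where "P i n H \<longleftrightarrow> H \<in> U \<and> (\<exists>col. \<forall>xs. length xs = n \<and> sorted_wrt lt xs \<and> set xs \<subseteq> H \<longrightarrow> c i xs = col)" for i n H
  have exP: "i \<in> I \<Longrightarrow> \<exists>H. P i n H" for i n
  proof -
    assume i: "i \<in> I"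
    have "finite (C i)" "\<forall>xs. c i xs \<in> C i" using C i by auto
    from rowbottom[OF this, of n] obtain H col where "H \<in> U" "\<forall>xs. length xs = n \<and> sorted_wrt lt xs \<and> set xs \<subseteq> H \<longrightarrow> c i xs = col"
      by blast
    thus ?thesis unfolding P_def by blast
  qed
  define HH where "HH p = (SOME H. P (fst p) (snd p) H)" for p
  have PP: "p \<in> I \<times> UNIV \<Longrightarrow> P (fst p) (snd p) (HH p)" for p
  proof -
    assume "p \<in> I \<times> UNIV"
    hence "fst p \<in> I" by auto
    from exP[OF this, of "snd p"] show ?thesis unfolding HH_def by (rule someI_ex)
  qed
  let ?F = "insert K (HH ` (I \<times> UNIV))"
  have "countable (I \<times> (UNIV::nat set))" using I by simp
  hence "countable (HH ` (I \<times> (UNIV::nat set)))" by (rule countable_image)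
  hence Fc: "countable ?F" by simp
  have FU: "?F \<subseteq> U"
  proof
    fix X assume "X \<in> ?F"
    then consider "X = K" | p where "p \<in> I \<times> UNIV" "X = HH p" by auto
    then show "X \<in> U"
    proof cases
      case 1 then show ?thesis using U_K by simp
    next
      case 2 then show ?thesis using PP[OF 2(1)] unfolding P_def by simp
    qed
  qed
  have FI: "\<Inter>?F \<in> U" by (rule U_countable_Inter[OF Fc FU]) simp
  have "\<forall>i\<in>I. \<forall>n. \<exists>col. \<forall>xs. length xs = n \<and> sorted_wrt lt xs \<and> set xs \<subseteq> \<Inter>?F \<longrightarrow> c i xs = col"
  proof (intro ballI allI)
    fix i n assume i: "i \<in> I"
    have "P i n (HH (i, n))" using PP[of "(i, n)"] i by simp
    then obtain col where col: "\<forall>xs. length xs = n \<and> sorted_wrt lt xs \<and> set xs \<subseteq> HH (i, n) \<longrightarrow> c i xs = col"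
      unfolding P_def by (elim conjE exE)
    have "(i, n) \<in> I \<times> (UNIV::nat set)" using i by simp
    hence "HH (i, n) \<in> ?F" by (intro insertI2 imageI)
    hence sub: "\<Inter>?F \<subseteq> HH (i, n)" by (rule Inter_lower)
    show "\<exists>col. \<forall>xs. length xs = n \<and> sorted_wrt lt xs \<and> set xs \<subseteq> \<Inter>?F \<longrightarrow> c i xs = col"
    proof (intro exI allI impI)
      fix xs assume xs: "length xs = n \<and> sorted_wrt lt xs \<and> set xs \<subseteq> \<Inter>?F"
      hence "set xs \<subseteq> HH (i, n)" using sub by (meson subset_trans)
      thus "c i xs = col" using col xs by simp
    qed
  qed
  thus ?thesis using FI by (rule bexI)
qed

end

lemma (in measurable_ultrafilter) normal_ultrafilter_normal_U: "normal_ultrafilter K normal_U"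
  unfolding normal_ultrafilter_def normal_ultrafilter_axioms_def
  using normal_measurable normal_fixes_regressive by blast

section \<open>Gale-Stewart theorem for open games\<close>

text \<open>Eve moves e, Adam answers d; Adam wins a play as soon as Eve makes a move e with
  lost h e at the current history h.\<close>

primrec run :: "(('e \<times> 'd) list \<Rightarrow> 'e) \<Rightarrow> (('e \<times> 'd) list \<Rightarrow> 'e \<Rightarrow> 'd) \<Rightarrow> ('e \<times> 'd) list \<Rightarrow> nat \<Rightarrow> ('e \<times> 'd) list" where
  "run \<sigma> \<tau> h 0 = h"
| "run \<sigma> \<tau> h (Suc n) = run \<sigma> \<tau> h n @ [(\<sigma> (run \<sigma> \<tau> h n), \<tau> (run \<sigma> \<tau> h n) (\<sigma> (run \<sigma> \<tau> h n)))]"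

definition adam_forces :: "(('e \<times> 'd) list \<Rightarrow> 'e \<Rightarrow> bool) \<Rightarrow> ('e \<times> 'd) list \<Rightarrow> (('e \<times> 'd) list \<Rightarrow> 'e \<Rightarrow> 'd) \<Rightarrow> bool" where
  "adam_forces lost h \<tau> \<longleftrightarrow> (\<forall>\<sigma>. \<exists>n. lost (run \<sigma> \<tau> h n) (\<sigma> (run \<sigma> \<tau> h n)))"

definition eve_avoids :: "(('e \<times> 'd) list \<Rightarrow> 'e \<Rightarrow> bool) \<Rightarrow> ('e \<times> 'd) list \<Rightarrow> (('e \<times> 'd) list \<Rightarrow> 'e) \<Rightarrow> bool" where
  "eve_avoids lost h \<sigma> \<longleftrightarrow> (\<forall>\<tau> n. \<not> lost (run \<sigma> \<tau> h n) (\<sigma> (run \<sigma> \<tau> h n)))"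

lemma run_prefix: "\<exists>ys. run \<sigma> \<tau> h n = h @ ys \<and> length ys = n"
  by (induction n) auto

lemma gale_stewart_step:
  fixes lost :: "('e \<times> 'd) list \<Rightarrow> 'e \<Rightarrow> bool"
  assumes good: "\<not> (\<exists>\<tau>. adam_forces lost h \<tau>)"
  shows "\<exists>e. \<not> lost h e \<and> (\<forall>d. \<not> (\<exists>\<tau>. adam_forces lost (h @ [(e, d)]) \<tau>))"
proof (rule ccontr)
  assume "\<not> ?thesis"
  hence A: "\<forall>e. \<not> lost h e \<longrightarrow> (\<exists>d \<tau>. adam_forces lost (h @ [(e, d)]) \<tau>)" by blast
  define dd where "dd e = (SOME d. \<exists>\<tau>. adam_forces lost (h @ [(e, d)]) \<tau>)" for e
  define TT where "TT e = (SOME \<tau>. adam_forces lost (h @ [(e, dd e)]) \<tau>)" for e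
  have TT: "adam_forces lost (h @ [(e, dd e)]) (TT e)" if "\<not> lost h e" for e
  proof -
    have "\<exists>d \<tau>. adam_forces lost (h @ [(e, d)]) \<tau>" using A that by blast
    hence "\<exists>\<tau>. adam_forces lost (h @ [(e, dd e)]) \<tau>" unfolding dd_def by (rule someI_ex)
    thus ?thesis unfolding TT_def by (rule someI_ex)
  qed
  define \<tau>' where "\<tau>' h' e' = (if h' = h then dd e' else TT (fst (h' ! length h)) h' e')" for h' e'
  have "adam_forces lost h \<tau>'"
    unfolding adam_forces_def
  proof
    fix \<sigma> :: "('e \<times> 'd) list \<Rightarrow> 'e"
    let ?e = "\<sigma> h"
    show "\<exists>n. lost (run \<sigma> \<tau>' h n) (\<sigma> (run \<sigma> \<tau>' h n))"
    proof (cases "lost h ?e")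
      case True
      then show ?thesis by (intro exI[of _ 0]) simp
    next
      case False
      let ?h1 = "h @ [(?e, dd ?e)]"
      have eq: "run \<sigma> \<tau>' h (Suc n) = run \<sigma> (TT ?e) ?h1 n" for n
      proof (induction n)
        case 0 then show ?case by (simp add: \<tau>'_def)
      next
        case (Suc n)
        obtain ys where ys: "run \<sigma> (TT ?e) ?h1 n = ?h1 @ ys" using run_prefix by blast
        have "\<tau>' (run \<sigma> (TT ?e) ?h1 n) = TT ?e (run \<sigma> (TT ?e) ?h1 n)"
          unfolding ys \<tau>'_def by (auto simp: nth_append fun_eq_iff)
        then show ?case using Suc.IH by (simp only: run.simps(2))
      qed
      from TT[OF False] obtain n where "lost (run \<sigma> (TT ?e) ?h1 n) (\<sigma> (run \<sigma> (TT ?e) ?h1 n))"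
        unfolding adam_forces_def by blast
      then show ?thesis using eq[of n] by (intro exI[of _ "Suc n"]) simp
    qed
  qed
  thus False using good by blast
qed

theorem gale_stewart:
  "(\<exists>\<sigma>. eve_avoids lost [] \<sigma>) \<or> (\<exists>\<tau>. adam_forces lost [] \<tau>)"
proof (rule disjCI)
  assume nA: "\<not> (\<exists>\<tau>. adam_forces lost [] \<tau>)"
  define good where "good h \<longleftrightarrow> \<not> (\<exists>\<tau>. adam_forces lost h \<tau>)" for h
  define \<sigma> where "\<sigma> h = (SOME e. \<not> lost h e \<and> (\<forall>d. good (h @ [(e, d)])))" for h
  have \<sigma>good: "good h \<Longrightarrow> \<not> lost h (\<sigma> h) \<and> (\<forall>d. good (h @ [(\<sigma> h, d)]))" for h
  proof -
    assume "good h"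
    hence "\<exists>e. \<not> lost h e \<and> (\<forall>d. good (h @ [(e, d)]))" using gale_stewart_step unfolding good_def by blast
    thus ?thesis unfolding \<sigma>_def by (rule someI_ex)
  qed
  have "good (run \<sigma> \<tau> [] n)" for \<tau> n
  proof (induction n)
    case 0 then show ?case using nA unfolding good_def by simp
  next
    case (Suc n) then show ?case using \<sigma>good by simp
  qed
  hence "eve_avoids lost [] \<sigma>" unfolding eve_avoids_def using \<sigma>good by blast
  thus "\<exists>\<sigma>. eve_avoids lost [] \<sigma>" by blast
qed

section \<open>The Kleene-Brouwer order\<close>

fun kb :: "('b \<Rightarrow> 'b \<Rightarrow> bool) \<Rightarrow> 'b list \<Rightarrow> 'b list \<Rightarrow> bool" where
  "kb lr s [] \<longleftrightarrow> s \<noteq> []"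
| "kb lr [] (b # t) \<longleftrightarrow> False"
| "kb lr (a # s) (b # t) \<longleftrightarrow> lr a b \<or> (a = b \<and> kb lr s t)"

lemma kb_Nil_left[simp]: "\<not> kb lr [] t"
  by (cases t) auto

lemma kb_irrefl: assumes "\<And>a. \<not> lr a a" shows "\<not> kb lr s s"
  using assms by (induction s) auto

lemma kb_trans:
  assumes tr: "\<And>a b c. lr a b \<Longrightarrow> lr b c \<Longrightarrow> lr a c"
  shows "kb lr s t \<Longrightarrow> kb lr t r \<Longrightarrow> kb lr s r"
proof (induction s arbitrary: t r)
  case Nil then show ?case by simp
next
  case (Cons a s)
  show ?case
  proof (cases r)
    case Nil then show ?thesis by simp
  next
    case (Cons d r')
    then obtain c t' where t: "t = c # t'" using Cons.prems(2) by (cases t) auto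
    show ?thesis using Cons.prems Cons.IH tr unfolding t \<open>r = d # r'\<close> by auto
  qed
qed

lemma kb_total:
  assumes tot: "\<And>a b. a \<in> L \<Longrightarrow> b \<in> L \<Longrightarrow> a = b \<or> lr a b \<or> lr b a"
  shows "set s \<subseteq> L \<Longrightarrow> set t \<subseteq> L \<Longrightarrow> s \<noteq> t \<Longrightarrow> kb lr s t \<or> kb lr t s"
proof (induction s arbitrary: t)
  case Nil then show ?case by (cases t) auto
next
  case (Cons a s)
  show ?case
  proof (cases t)
    case Nil then show ?thesis by simp
  next
    case (Cons b t')
    then show ?thesis using Cons.prems Cons.IH[of t'] tot[of a b] by auto
  qed
qed

lemma kb_extend: "u \<noteq> [] \<Longrightarrow> kb lr (t @ u) t"
  by (induction t) auto

lemma kb_cancel: "(\<And>a. \<not> lr a a) \<Longrightarrow> kb lr (p @ s) (p @ t) \<longleftrightarrow> kb lr s t"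
  by (induction p) auto

lemma wf_descent_eventually_const:
  fixes x :: "nat \<Rightarrow> 'b"
  assumes wf: "wf {(a, b). lr a b}" and tr: "\<And>a b c. lr a b \<Longrightarrow> lr b c \<Longrightarrow> lr a c"
    and dec: "\<forall>n\<ge>N. x (Suc n) = x n \<or> lr (x (Suc n)) (x n)"
  shows "\<exists>M\<ge>N. \<forall>n\<ge>M. x n = x M"
proof -
  obtain z where z: "z \<in> {x n | n. n \<ge> N}" "\<And>y. (y, z) \<in> {(a, b). lr a b} \<Longrightarrow> y \<notin> {x n | n. n \<ge> N}"
    using wfE_min[OF wf, of "x N" "{x n | n. n \<ge> N}"] by blast
  then obtain n0 where n0: "n0 \<ge> N" "z = x n0" by auto
  have le: "x n = x n0 \<or> lr (x n) (x n0)" if "n \<ge> n0" for n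
    using that
  proof (induction n rule: dec_induct)
    case base then show ?case by simp
  next
    case (step m)
    have "m \<ge> N" using step.hyps(1) n0(1) by simp
    hence "x (Suc m) = x m \<or> lr (x (Suc m)) (x m)" using dec by simp
    then show ?case
    proof
      assume "x (Suc m) = x m" then show ?case using step.IH by simp
    next
      assume h: "lr (x (Suc m)) (x m)"
      show ?case using step.IH
      proof
        assume "x m = x n0" then show ?case using h by simp
      next
        assume "lr (x m) (x n0)" then show ?case using h tr[of "x (Suc m)" "x m" "x n0"] by simp
      qed
    qed
  qed
  have "\<forall>n\<ge>n0. x n = x n0"
  proof (intro allI impI)
    fix n assume "n \<ge> n0"
    moreover have "x n \<in> {x n | n. n \<ge> N}" using \<open>n \<ge> n0\<close> n0(1) by auto
    ultimately show "x n = x n0" using le[of n] z(2) n0(2) by auto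
  qed
  thus ?thesis using n0(1) by blast
qed

definition prefix_closed :: "'b list set \<Rightarrow> bool" where
  "prefix_closed T \<longleftrightarrow> (\<forall>s u. s @ u \<in> T \<longrightarrow> s \<in> T)"

definition has_branch :: "'b list set \<Rightarrow> bool" where
  "has_branch T \<longleftrightarrow> (\<exists>f. \<forall>k. f k \<in> T \<and> (\<exists>a. f (Suc k) = f k @ [a]))"

lemma kb_descent_next_letter:
  assumes wf: "wf {(a, b). lr a b}" and tr: "\<And>a b c. lr a b \<Longrightarrow> lr b c \<Longrightarrow> lr a c"
    and desc: "\<forall>n\<ge>N. kb lr (s (Suc n)) (s n)" and pre: "\<forall>n\<ge>N. \<exists>u. s n = p @ u"
  shows "\<exists>a M. M \<ge> N \<and> (\<forall>n\<ge>M. \<exists>u. s n = (p @ [a]) @ u)"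
proof -
  have irr: "\<And>a. \<not> lr a a" using wf_not_refl[OF wf] by simp
  define u where "u n = drop (length p) (s n)" for n
  have su: "s n = p @ u n" if "n \<ge> N" for n
    using pre that unfolding u_def by auto
  have ud: "kb lr (u (Suc n)) (u n)" if "n \<ge> N" for n
    using desc su[of n] su[of "Suc n"] that kb_cancel[of lr p, OF irr] by auto
  have une: "u n \<noteq> []" if "n \<ge> Suc N" for n
  proof -
    have "n = Suc (n - 1)" "n - 1 \<ge> N" using that by auto
    thus ?thesis using ud[of "n - 1"] by (metis kb_Nil_left)
  qed
  have dec: "\<forall>n\<ge>Suc N. hd (u (Suc n)) = hd (u n) \<or> lr (hd (u (Suc n))) (hd (u n))"
  proof (intro allI impI)
    fix n assume n: "n \<ge> Suc N"
    obtain a v where "u n = a # v" using une[OF n] by (cases "u n") auto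
    moreover obtain b v' where "u (Suc n) = b # v'" using une[of "Suc n"] n by (cases "u (Suc n)") auto
    ultimately show "hd (u (Suc n)) = hd (u n) \<or> lr (hd (u (Suc n))) (hd (u n))"
      using ud[of n] n by auto
  qed
  have "\<exists>M\<ge>Suc N. \<forall>n\<ge>M. hd (u n) = hd (u M)"
    by (rule wf_descent_eventually_const[OF wf]) (erule (1) tr, rule dec)
  then obtain M where M: "M \<ge> Suc N" "\<forall>n\<ge>M. hd (u n) = hd (u M)" by blast
  have "\<exists>v. s n = (p @ [hd (u M)]) @ v" if n: "n \<ge> M" for n
  proof -
    obtain v where "u n = hd (u n) # v" using une[of n] n M(1) by (cases "u n") auto
    moreover have "hd (u n) = hd (u M)" using M(2) n by blast
    ultimately show ?thesis using su[of n] M(1) n by auto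
  qed
  then show ?thesis using M(1) by (intro exI[of _ "hd (u M)"] exI[of _ M]) auto
qed

text \<open>From an infinite Kleene-Brouwer descending chain in a prefix-closed tree, the
  eventually stable first letters of its tails spell out an infinite branch.\<close>

lemma wf_kb_if_no_branch:
  fixes T :: "'b list set" and lr :: "'b \<Rightarrow> 'b \<Rightarrow> bool"
  assumes wf: "wf {(a, b). lr a b}" and tr: "\<And>a b c. lr a b \<Longrightarrow> lr b c \<Longrightarrow> lr a c"
    and T: "prefix_closed T" and nb: "\<not> has_branch T"
  shows "wf {(s, t). s \<in> T \<and> t \<in> T \<and> kb lr s t}"
proof (rule ccontr)
  assume "\<not> ?thesis"
  then obtain s where s: "\<forall>i. (s (Suc i), s i) \<in> {(s, t). s \<in> T \<and> t \<in> T \<and> kb lr s t}"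
    unfolding wf_iff_no_infinite_down_chain by blast
  hence sT: "\<And>i. s i \<in> T" and sd: "\<forall>i. kb lr (s (Suc i)) (s i)" by auto
  define stable where "stable q \<longleftrightarrow> (\<forall>n\<ge>snd q. \<exists>u. s n = fst q @ u)" for q :: "'b list \<times> nat"
  define next_stable where
    "next_stable q q' \<longleftrightarrow> (\<exists>a. fst q' = fst q @ [a]) \<and> stable q'" for q q' :: "'b list \<times> nat"
  have step: "\<exists>q'. next_stable q q'" if "stable q" for q
  proof -
    have "\<exists>a M. M \<ge> snd q \<and> (\<forall>n\<ge>M. \<exists>u. s n = (fst q @ [a]) @ u)"
      by (rule kb_descent_next_letter[OF wf]) (erule (1) tr, use sd that in \<open>simp_all add: stable_def\<close>)
    then obtain a M where "M \<ge> snd q" "\<forall>n\<ge>M. \<exists>u. s n = (fst q @ [a]) @ u" by blast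
    then show ?thesis unfolding next_stable_def stable_def by (intro exI[of _ "(fst q @ [a], M)"]) simp
  qed
  define f where "f = rec_nat ([], 0) (\<lambda>k q. SOME q'. next_stable q q')"
  have stable_f: "stable (f k)" for k
  proof (induction k)
    case 0 then show ?case unfolding f_def stable_def by simp
  next
    case (Suc k)
    have "next_stable (f k) (f (Suc k))" unfolding f_def using someI_ex[OF step[OF Suc.IH[unfolded f_def]]] by simp
    then show ?case unfolding next_stable_def by simp
  qed
  have next_f: "next_stable (f k) (f (Suc k))" for k
    unfolding f_def using someI_ex[OF step[OF stable_f[unfolded f_def]]] by simp
  have "has_branch T"
    unfolding has_branch_def
  proof (intro exI[of _ "\<lambda>k. fst (f k)"] allI conjI)
    fix k
    obtain u where "s (snd (f k)) = fst (f k) @ u" using stable_f[of k] unfolding stable_def by auto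
    thus "fst (f k) \<in> T" using T sT unfolding prefix_closed_def by metis
    show "\<exists>a. fst (f (Suc k)) = fst (f k) @ [a]" using next_f[of k] unfolding next_stable_def by simp
  qed
  thus False using nb by simp
qed

lemma no_branch_if_kb_embeds:
  assumes wfl: "wf {(a, b). lt a b}"
    and h: "\<And>s t. s \<in> T \<Longrightarrow> t \<in> T \<Longrightarrow> kb lr s t \<Longrightarrow> lt (h s) (h t)"
  shows "\<not> has_branch T"
proof
  assume "has_branch T"
  then obtain f where f: "\<forall>k. f k \<in> T \<and> (\<exists>a. f (Suc k) = f k @ [a])" unfolding has_branch_def by blast
  have "\<forall>k. ((h \<circ> f) (Suc k), (h \<circ> f) k) \<in> {(a, b). lt a b}"
  proof
    fix k
    obtain a where "f (Suc k) = f k @ [a]" using f by blast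
    hence "kb lr (f (Suc k)) (f k)" using kb_extend[of "[a]"] by simp
    thus "((h \<circ> f) (Suc k), (h \<circ> f) k) \<in> {(a, b). lt a b}" using h f by auto
  qed
  thus False using wfl unfolding wf_iff_no_infinite_down_chain by blast
qed

section \<open>Loss witnesses\<close>

text \<open>A loss witness v = [s0, ..., sm] for a play lists consecutive nonempty blocks of
  a concrete path qI s0 ... sm of the play. The length k of the first block fixes
  the slope: at the end of every later block the accumulated weight is at most -1/k
  times the length of the path so far.\<close>

definition witness_path :: "'q \<Rightarrow> 'q list list \<Rightarrow> 'q list" where "witness_path qI v = qI # concat v"
definition wlen :: "'q list list \<Rightarrow> nat" where "wlen v = length (concat v)"

definition loss_witness :: "'q \<Rightarrow> ('q \<times> 'a \<times> 'q) set \<Rightarrow> ('q \<times> 'a \<times> 'q \<Rightarrow> int) \<Rightarrow> (nat \<Rightarrow> 'q set) \<Rightarrow> (nat \<Rightarrow> 'a) \<Rightarrow> 'q list list \<Rightarrow> bool" where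
  "loss_witness qI Delta w obs act v \<longleftrightarrow>
     (\<forall>s\<in>set v. s \<noteq> []) \<and>
     (\<forall>i\<le>wlen v. witness_path qI v ! i \<in> obs i) \<and>
     (\<forall>i<wlen v. (witness_path qI v ! i, act i, witness_path qI v ! Suc i) \<in> Delta) \<and>
     (\<forall>j. 0 < j \<and> j < length v \<longrightarrow>
        int (length (hd v)) * path_weight w (\<lambda>i. witness_path qI v ! i) act (wlen (take (Suc j) v))
          \<le> - int (wlen (take (Suc j) v)))"

lemma path_weight_cong:
  assumes "\<And>i. i \<le> n \<Longrightarrow> qs i = qs' i" "\<And>i. i < n \<Longrightarrow> act i = act' i"
  shows "path_weight w qs act n = path_weight w qs' act' n"
  unfolding path_weight_def using assms by (intro sum.cong) auto

lemma witness_path_append_nth: "i \<le> wlen v \<Longrightarrow> witness_path qI (v @ u) ! i = witness_path qI v ! i"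
  unfolding witness_path_def wlen_def by (cases i) (auto simp: nth_append)

lemma wlen_append: "wlen (v @ u) = wlen v + wlen u" unfolding wlen_def by simp

lemma loss_witness_cong:
  assumes "\<And>i. i \<le> wlen v \<Longrightarrow> obs i = obs' i" "\<And>i. i < wlen v \<Longrightarrow> act i = act' i"
  shows "loss_witness qI Delta w obs act v = loss_witness qI Delta w obs' act' v"
proof -
  have "wlen (take (Suc j) v) \<le> wlen v" for j
    using wlen_append[of "take (Suc j) v" "drop (Suc j) v"] by simp
  hence "\<And>j. path_weight w (\<lambda>i. witness_path qI v ! i) act (wlen (take (Suc j) v)) =
         path_weight w (\<lambda>i. witness_path qI v ! i) act' (wlen (take (Suc j) v))"
  proof -
    fix j
    show "path_weight w (\<lambda>i. witness_path qI v ! i) act (wlen (take (Suc j) v)) =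
         path_weight w (\<lambda>i. witness_path qI v ! i) act' (wlen (take (Suc j) v))"
  proof (intro path_weight_cong)
    fix i assume "i < wlen (take (Suc j) v)"
    moreover have "wlen (take (Suc j) v) \<le> wlen v" by fact
    ultimately show "act i = act' i" using assms(2) by simp
  qed simp
  qed
  thus ?thesis unfolding loss_witness_def using assms by auto
qed

lemma loss_witness_prefix:
  assumes "loss_witness qI Delta w obs act (v @ u)"
  shows "loss_witness qI Delta w obs act v"
proof -
  have L: "wlen v \<le> wlen (v @ u)" using wlen_append[of v u] by simp
  have p: "\<And>i. i \<le> wlen v \<Longrightarrow> witness_path qI (v @ u) ! i = witness_path qI v ! i" by (rule witness_path_append_nth)
  have 1: "\<forall>s\<in>set v. s \<noteq> []" using assms unfolding loss_witness_def by auto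
  have 2: "\<forall>i\<le>wlen v. witness_path qI v ! i \<in> obs i" using assms L p unfolding loss_witness_def by (metis le_trans)
  have 3: "\<forall>i<wlen v. (witness_path qI v ! i, act i, witness_path qI v ! Suc i) \<in> Delta"
  proof (intro allI impI)
    fix i assume i: "i < wlen v"
    have "(witness_path qI (v @ u) ! i, act i, witness_path qI (v @ u) ! Suc i) \<in> Delta"
      using assms i L unfolding loss_witness_def by auto
    thus "(witness_path qI v ! i, act i, witness_path qI v ! Suc i) \<in> Delta" using p[of i] p[of "Suc i"] i by simp
  qed
  have 4: "\<forall>j. 0 < j \<and> j < length v \<longrightarrow>
        int (length (hd v)) * path_weight w (\<lambda>i. witness_path qI v ! i) act (wlen (take (Suc j) v))
          \<le> - int (wlen (take (Suc j) v))"
  proof (intro allI impI)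
    fix j assume j: "0 < j \<and> j < length v"
    have tk: "take (Suc j) (v @ u) = take (Suc j) v" using j by (simp add: take_append)
    have hd: "hd (v @ u) = hd v" using j by (cases v) auto
    have Lj: "wlen (take (Suc j) v) \<le> wlen v"
      using wlen_append[of "take (Suc j) v" "drop (Suc j) v"] by simp
    have "path_weight w (\<lambda>i. witness_path qI (v @ u) ! i) act (wlen (take (Suc j) v)) =
          path_weight w (\<lambda>i. witness_path qI v ! i) act (wlen (take (Suc j) v))"
      using p Lj by (intro path_weight_cong) auto
    moreover have "int (length (hd (v @ u))) * path_weight w (\<lambda>i. witness_path qI (v @ u) ! i) act (wlen (take (Suc j) (v @ u)))
          \<le> - int (wlen (take (Suc j) (v @ u)))"
      using assms j unfolding loss_witness_def by (simp del: take_append)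
    ultimately show "int (length (hd v)) * path_weight w (\<lambda>i. witness_path qI v ! i) act (wlen (take (Suc j) v))
          \<le> - int (wlen (take (Suc j) v))" using tk hd by (simp del: take_append)
  qed
  show ?thesis unfolding loss_witness_def using 1 2 3 4 by blast
qed

lemma loss_witnesses_prefix_closed: "prefix_closed {v. loss_witness qI Delta w obs act v}"
  unfolding prefix_closed_def by (auto dest: loss_witness_prefix)

lemma ereal_negative_le_inverse_nat:
  fixes y :: ereal
  assumes "y < 0"
  shows "\<exists>k::nat. k \<ge> 1 \<and> y \<le> ereal (- 1 / real k)"
proof (cases y)
  case (real r)
  define k :: nat where "k = nat (ceiling (- 1 / r)) + 1"
  have "real k \<ge> - 1 / r" unfolding k_def by linarith
  then have "r * real k \<le> - 1" using assms real by (simp add: field_simps)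
  moreover have "0 < real k" unfolding k_def by simp
  ultimately have "r \<le> - 1 / real k" by (simp add: field_simps)
  then show ?thesis using real by (intro exI[of _ k]) (simp add: k_def)
qed (use assms in \<open>auto intro: exI[of _ 1]\<close>)

definition frequently_below :: "('q \<times> 'a \<times> 'q \<Rightarrow> int) \<Rightarrow> (nat \<Rightarrow> 'q) \<Rightarrow> (nat \<Rightarrow> 'a) \<Rightarrow> nat \<Rightarrow> bool" where
  "frequently_below w qs act k \<longleftrightarrow> (\<forall>N. \<exists>n\<ge>N. 0 < n \<and> int k * path_weight w qs act n \<le> - int n)"

lemma lower_MP_negative_iff:
  "\<not> 0 \<le> lower_MP w qs act \<longleftrightarrow> (\<exists>k\<ge>1. frequently_below w qs act k)"
proof -
  have liminf_neg: "\<not> 0 \<le> lower_MP w qs act \<longleftrightarrow>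
      (\<exists>y<0. \<forall>N. \<exists>n\<ge>N. ereal (real_of_int (path_weight w qs act n) / real n) \<le> y)"
    unfolding lower_MP_def le_Liminf_iff eventually_sequentially by (auto simp: not_less)
  have below_iff: "int k * path_weight w qs act n \<le> - int n \<longleftrightarrow>
      real_of_int (path_weight w qs act n) / real n \<le> - 1 / real k" if "k \<ge> 1" "n > 0" for k n
  proof -
    have "int k * path_weight w qs act n \<le> - int n \<longleftrightarrow>
        real k * real_of_int (path_weight w qs act n) \<le> - real n"
      by (metis of_int_le_iff of_int_minus of_int_mult of_int_of_nat_eq)
    also have "\<dots> \<longleftrightarrow> real_of_int (path_weight w qs act n) / real n \<le> - 1 / real k"
      using that by (simp add: field_simps)
    finally show ?thesis .
  qed
  show ?thesis
  proof
    assume "\<not> 0 \<le> lower_MP w qs act"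
    then obtain y where y: "y < 0" "\<forall>N. \<exists>n\<ge>N. ereal (real_of_int (path_weight w qs act n) / real n) \<le> y"
      using liminf_neg by blast
    obtain k :: nat where k: "k \<ge> 1" "y \<le> ereal (- 1 / real k)"
      using ereal_negative_le_inverse_nat[OF y(1)] by blast
    have "frequently_below w qs act k"
      unfolding frequently_below_def
    proof
      fix N
      obtain n where n: "n \<ge> Suc N" "ereal (real_of_int (path_weight w qs act n) / real n) \<le> y"
        using y(2) by blast
      have "real_of_int (path_weight w qs act n) / real n \<le> - 1 / real k"
        using n(2) k(2) by (metis ereal_less_eq(3) order_trans)
      thus "\<exists>n\<ge>N. 0 < n \<and> int k * path_weight w qs act n \<le> - int n"
        using below_iff[OF k(1), of n] n(1) by (intro exI[of _ n]) auto
    qed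
    thus "\<exists>k\<ge>1. frequently_below w qs act k" using k(1) by blast
  next
    assume "\<exists>k\<ge>1. frequently_below w qs act k"
    then obtain k where k: "k \<ge> 1" "frequently_below w qs act k" by blast
    have "\<forall>N. \<exists>n\<ge>N. ereal (real_of_int (path_weight w qs act n) / real n) \<le> ereal (- 1 / real k)"
      using k(2) below_iff[OF k(1)] unfolding frequently_below_def by fastforce
    thus "\<not> 0 \<le> lower_MP w qs act" unfolding liminf_neg using k(1) by (intro exI[of _ "ereal (- 1 / real k)"]) auto
  qed
qed

lemma branch_limit_concretisation:
  assumes f: "\<And>k. loss_witness qI Delta w obs act (f k)" "\<And>k. f (Suc k) = f k @ [sg k]"
  defines "qs \<equiv> \<lambda>i. witness_path qI (f i) ! i"
  shows "concretisation Delta obs act qs"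
    and "\<And>i j. i \<le> wlen (f j) \<Longrightarrow> witness_path qI (f j) ! i = qs i"
    and "\<And>k. k \<le> wlen (f k)"
proof -
  have pos: "0 < length (sg k)" for k using f(1)[of "Suc k"] unfolding loss_witness_def f(2) by auto
  show wlen_ge: "k \<le> wlen (f k)" for k
  proof (induction k)
    case (Suc k)
    have "wlen (f (Suc k)) = wlen (f k) + length (sg k)" by (simp add: f(2) wlen_def)
    then show ?case using Suc.IH pos[of k] by linarith
  qed simp
  have mono: "\<exists>u. f j = f i @ u" if "i \<le> j" for i j
    using that by (induction j rule: dec_induct) (auto simp: f(2))
  show qs_eq: "witness_path qI (f j) ! i = qs i" if "i \<le> wlen (f j)" for i j
  proof (cases "i \<le> j")
    case True
    then obtain u where "f j = f i @ u" using mono by blast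
    then show ?thesis unfolding qs_def using wlen_ge[of i] by (simp add: witness_path_append_nth)
  next
    case False
    then obtain u where "f i = f j @ u" using mono[of j i] by auto
    then show ?thesis unfolding qs_def using that by (simp add: witness_path_append_nth)
  qed
  show "concretisation Delta obs act qs"
    unfolding concretisation_def
  proof (intro conjI allI)
    fix i
    show "qs i \<in> obs i" using f(1)[of i] wlen_ge[of i] unfolding loss_witness_def qs_def by auto
    have i: "i < wlen (f (Suc i))" using wlen_ge[of "Suc i"] by simp
    hence "(witness_path qI (f (Suc i)) ! i, act i, witness_path qI (f (Suc i)) ! Suc i) \<in> Delta"
      using f(1)[of "Suc i"] unfolding loss_witness_def by blast
    thus "(qs i, act i, qs (Suc i)) \<in> Delta" using qs_eq i by simp
  qed
qed

lemma branch_imp_losing_concretisation: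
  assumes "has_branch {v. loss_witness qI Delta w obs act v}"
  shows "\<exists>qs. concretisation Delta obs act qs \<and> \<not> 0 \<le> lower_MP w qs act"
proof -
  obtain f where f: "\<forall>k. loss_witness qI Delta w obs act (f k) \<and> (\<exists>a. f (Suc k) = f k @ [a])"
    using assms unfolding has_branch_def by auto
  then have fv: "\<And>k. loss_witness qI Delta w obs act (f k)" by blast
  have "\<exists>sg. \<forall>k. f (Suc k) = f k @ [sg k]" using f by (intro choice) blast
  then obtain sg where fS: "\<And>k. f (Suc k) = f k @ [sg k]" by blast
  define qs where "qs i = witness_path qI (f i) ! i" for i
  note limit = branch_limit_concretisation[of qI Delta w obs act f sg, OF fv fS, folded qs_def]
  define k where "k = length (hd (f 1))"
  have hd_f: "hd (f j) = hd (f 1)" if "j \<ge> 1" for j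
    using that
  proof (induction j rule: dec_induct)
    case (step n)
    then obtain m where "n = Suc m" by (cases n) auto
    then have "f n \<noteq> []" using fS[of m] by simp
    then show ?case using step.IH fS[of n] by (simp add: hd_append)
  qed simp
  have "f 1 \<noteq> []" using fS[of 0] by simp
  then have "hd (f 1) \<noteq> []" using fv[of 1] unfolding loss_witness_def by simp
  then have k: "k \<ge> 1" unfolding k_def by (simp add: Suc_le_eq)
  have "frequently_below w qs act k"
    unfolding frequently_below_def
  proof
    fix N :: nat
    let ?j = "max N 2"
    define m where "m = length (f ?j) - 1"
    have "j \<le> length (f j)" for j by (induction j) (simp_all add: fS)
    then have "2 \<le> length (f ?j)" by (meson le_trans max.cobounded2)
    then have m: "0 < m" "m < length (f ?j)" "take (Suc m) (f ?j) = f ?j" unfolding m_def by auto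
    then have "int (length (hd (f ?j))) * path_weight w (\<lambda>i. witness_path qI (f ?j) ! i) act
        (wlen (take (Suc m) (f ?j))) \<le> - int (wlen (take (Suc m) (f ?j)))"
      using fv[of ?j, unfolded loss_witness_def] by (meson m(1,2))
    then have "int k * path_weight w (\<lambda>i. witness_path qI (f ?j) ! i) act (wlen (f ?j)) \<le> - int (wlen (f ?j))"
      using m(3) hd_f[of ?j] unfolding k_def by simp
    moreover have "path_weight w (\<lambda>i. witness_path qI (f ?j) ! i) act (wlen (f ?j))
        = path_weight w qs act (wlen (f ?j))"
      by (rule path_weight_cong) (auto simp: limit(2))
    ultimately show "\<exists>n\<ge>N. 0 < n \<and> int k * path_weight w qs act n \<le> - int n"
      using limit(3)[of ?j] by (intro exI[of _ "wlen (f ?j)"]) auto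
  qed
  thus ?thesis using limit(1) k lower_MP_negative_iff by blast
qed

lemma frequently_strict_mono:
  fixes P :: "nat \<Rightarrow> bool"
  assumes "\<forall>N. \<exists>n\<ge>N. P n"
  shows "\<exists>E. E 0 = e \<and> strict_mono E \<and> (\<forall>j. P (E (Suc j)))"
proof -
  define next_P where "next_P m = (LEAST n. m < n \<and> P n)" for m
  have next_P: "m < next_P m \<and> P (next_P m)" for m
    unfolding next_P_def by (rule LeastI_ex) (use assms in \<open>meson Suc_le_eq\<close>)
  define E where "E = rec_nat e (\<lambda>_. next_P)"
  have "E (Suc j) = next_P (E j)" for j unfolding E_def by simp
  then show ?thesis using next_P unfolding strict_mono_Suc_iff by (intro exI[of _ E]) (simp add: E_def)
qed

definition block_start :: "(nat \<Rightarrow> nat) \<Rightarrow> nat \<Rightarrow> nat" where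
  "block_start E i = (case i of 0 \<Rightarrow> 0 | Suc i' \<Rightarrow> E i')"

definition blocks :: "(nat \<Rightarrow> 'q) \<Rightarrow> (nat \<Rightarrow> nat) \<Rightarrow> nat \<Rightarrow> 'q list list" where
  "blocks qs E j = map (\<lambda>i. map qs [Suc (block_start E i)..<Suc (E i)]) [0..<j]"

lemma block_start_less:
  assumes "strict_mono E" "0 < E 0"
  shows "block_start E i < E i"
  using assms by (cases i) (auto simp: block_start_def strict_mono_Suc_iff)

lemma concat_blocks:
  assumes "strict_mono E" "0 < E 0"
  shows "concat (blocks qs E j) = map qs [1..<Suc (block_start E j)]"
proof (induction j)
  case 0
  show ?case by (simp add: blocks_def block_start_def)
next
  case (Suc j)
  have le: "block_start E j \<le> E j" using block_start_less[OF assms] less_imp_le by blast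
  have "[1..<Suc (block_start E j)] @ [Suc (block_start E j)..<Suc (E j)] = [1..<Suc (E j)]"
    using upt_add_eq_append[of 1 "Suc (block_start E j)" "E j - block_start E j"] le by simp
  moreover have "blocks qs E (Suc j) = blocks qs E j @ [map qs [Suc (block_start E j)..<Suc (E j)]]"
    by (simp add: blocks_def)
  ultimately show ?case using Suc.IH by (simp add: block_start_def flip: map_append)
qed

lemma blocks_loss_witness:
  assumes conc: "concretisation Delta obs act qs" and q0: "qs 0 = qI"
    and E: "strict_mono E" "0 < E 0"
    and below: "\<forall>j. int (E 0) * path_weight w qs act (E (Suc j)) \<le> - int (E (Suc j))"
  shows "loss_witness qI Delta w obs act (blocks qs E j)"
proof -
  have wlen_blocks: "wlen (blocks qs E n) = block_start E n" for n
    unfolding wlen_def concat_blocks[OF E] by simp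
  have path: "witness_path qI (blocks qs E j) ! i = qs i" if "i \<le> wlen (blocks qs E j)" for i
  proof (cases i)
    case (Suc i')
    then show ?thesis using that unfolding witness_path_def concat_blocks[OF E] wlen_blocks
      by (simp add: nth_map_upt del: upt_Suc)
  qed (simp add: witness_path_def q0)
  have take_blocks: "take (Suc i) (blocks qs E j) = blocks qs E (Suc i)" if "i < j" for i
    using that unfolding blocks_def by (simp add: take_map del: upt_Suc)
  show ?thesis
    unfolding loss_witness_def
  proof (intro conjI allI impI ballI)
    fix s assume "s \<in> set (blocks qs E j)"
    then obtain i where "s = map qs [Suc (block_start E i)..<Suc (E i)]" unfolding blocks_def by auto
    then show "s \<noteq> []" using block_start_less[OF E, of i] by simp
  next
    fix i assume "i \<le> wlen (blocks qs E j)"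
    then show "witness_path qI (blocks qs E j) ! i \<in> obs i" using path conc unfolding concretisation_def by simp
  next
    fix i assume "i < wlen (blocks qs E j)"
    then show "(witness_path qI (blocks qs E j) ! i, act i, witness_path qI (blocks qs E j) ! Suc i) \<in> Delta"
      using path conc unfolding concretisation_def by simp
  next
    fix i assume i: "0 < i \<and> i < length (blocks qs E j)"
    then obtain i' where i': "i = Suc i'" "i < j" unfolding blocks_def by (cases i) auto
    have "length (hd (blocks qs E j)) = E 0"
      using i' unfolding blocks_def by (simp add: upt_conv_Cons block_start_def del: upt_Suc)
    moreover have "wlen (take (Suc i) (blocks qs E j)) = E i"
      using take_blocks[OF i'(2)] wlen_blocks[of "Suc i"] by (simp add: block_start_def)
    moreover have "path_weight w (\<lambda>i. witness_path qI (blocks qs E j) ! i) act (E i) = path_weight w qs act (E i)"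
    proof (rule path_weight_cong)
      have "E i \<le> block_start E j"
        using i'(2) E(1) by (cases j) (auto simp: block_start_def strict_mono_less_eq)
      then show "\<And>n. n \<le> E i \<Longrightarrow> witness_path qI (blocks qs E j) ! n = qs n"
        using path wlen_blocks by simp
    qed simp
    ultimately show "int (length (hd (blocks qs E j))) *
          path_weight w (\<lambda>i. witness_path qI (blocks qs E j) ! i) act (wlen (take (Suc i) (blocks qs E j)))
        \<le> - int (wlen (take (Suc i) (blocks qs E j)))"
      using below i'(1) by simp
  qed
qed

lemma losing_concretisation_imp_branch:
  assumes conc: "concretisation Delta obs act qs" and neg: "\<not> 0 \<le> lower_MP w qs act"
    and obs0: "obs 0 = {qI}"
  shows "has_branch {v. loss_witness qI Delta w obs act v}"
proof -
  obtain k where k: "k \<ge> 1" "frequently_below w qs act k"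
    using neg lower_MP_negative_iff by blast
  then obtain E where E: "E 0 = k" "strict_mono E"
      "\<forall>j. 0 < E (Suc j) \<and> int k * path_weight w qs act (E (Suc j)) \<le> - int (E (Suc j))"
    using frequently_strict_mono[of "\<lambda>n. 0 < n \<and> int k * path_weight w qs act n \<le> - int n"]
    unfolding frequently_below_def by blast
  have "qs 0 = qI" using conc obs0 unfolding concretisation_def by blast
  then have "loss_witness qI Delta w obs act (blocks qs E j)" for j
    using blocks_loss_witness[OF conc _ E(2)] E(1,3) k(1) by simp
  moreover have "blocks qs E (Suc j) = blocks qs E j @ [map qs [Suc (block_start E j)..<Suc (E j)]]" for j
    unfolding blocks_def by simp
  ultimately show ?thesis unfolding has_branch_def by blast
qed

lemma winning_Eve_play_iff_no_branch:
  assumes "obs 0 = {qI}"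
  shows "winning_Eve_play Delta w obs act \<longleftrightarrow> \<not> has_branch {v. loss_witness qI Delta w obs act v}"
proof
  assume "winning_Eve_play Delta w obs act"
  then show "\<not> has_branch {v. loss_witness qI Delta w obs act v}"
    using branch_imp_losing_concretisation[of qI Delta w obs act] unfolding winning_Eve_play_def by blast
next
  assume "\<not> has_branch {v. loss_witness qI Delta w obs act v}"
  then show "winning_Eve_play Delta w obs act"
    using losing_concretisation_imp_branch[of Delta obs act _ w qI] assms unfolding winning_Eve_play_def by blast
qed

section \<open>The auxiliary game\<close>

lemma sorted_list_exists:
  assumes irr: "\<And>a. \<not> R a a" and tr: "\<And>a b c. R a b \<Longrightarrow> R b c \<Longrightarrow> R a c"
  shows "finite V \<Longrightarrow> (\<forall>a\<in>V. \<forall>b\<in>V. a \<noteq> b \<longrightarrow> R a b \<or> R b a) \<Longrightarrow>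
     \<exists>vs. set vs = V \<and> distinct vs \<and> sorted_wrt R vs"
proof (induction V rule: finite_induct)
  case empty then show ?case by auto
next
  case (insert x F)
  from insert.IH insert.prems obtain vs where vs: "set vs = F" "distinct vs" "sorted_wrt R vs" by auto
  let ?l = "filter (\<lambda>y. R y x) vs" and ?r = "filter (\<lambda>y. R x y) vs"
  have tot: "\<forall>y\<in>F. R y x \<or> R x y" using insert.prems insert.hyps(2) by auto
  have "set (?l @ [x] @ ?r) = insert x F" using vs(1) tot by auto
  moreover have "distinct (?l @ [x] @ ?r)"
    using vs(2) irr by (auto intro: tr dest: tr)
  moreover have "sorted_wrt R (?l @ [x] @ ?r)"
    unfolding sorted_wrt_append using vs(3) sorted_wrt_filter by (auto intro: tr)
  ultimately show ?case by blast
qed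

definition first_index :: "'b list \<Rightarrow> 'b \<Rightarrow> nat" where "first_index vs v = (LEAST i. i < length vs \<and> vs ! i = v)"

lemma first_index: "v \<in> set vs \<Longrightarrow> first_index vs v < length vs \<and> vs ! first_index vs v = v"
  unfolding first_index_def by (rule LeastI_ex) (simp add: in_set_conv_nth)

lemma length_le_concat: "\<forall>s\<in>set v. s \<noteq> [] \<Longrightarrow> length v \<le> length (concat v)"
proof (induction v)
  case (Cons s v) then show ?case by (cases s) auto
qed simp

lemma mem_concat_length: "s \<in> set v \<Longrightarrow> length s \<le> length (concat v)"
  by (induction v) auto

type_synonym ('a, 'q, 'u) aux_move = "'a \<times> ('q list list \<Rightarrow> 'u)"
type_synonym ('a, 'q, 'u) aux_hist = "(('a, 'q, 'u) aux_move \<times> 'q set) list"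

locale limited_game = normal_ultrafilter K U for K :: "'u set" and U +
  fixes Q :: "'q set" and qI :: 'q and Sig :: "'a set" and Delta :: "('q \<times> 'a \<times> 'q) set"
    and w :: "'q \<times> 'a \<times> 'q \<Rightarrow> int" and Obs :: "'q set set"
  assumes limited: "MPG_limited Q qI Sig Delta Obs"
begin

lemma finite_Q: "finite Q" using limited unfolding MPG_limited_def MPG_partial_def by blast
lemma finite_Sig: "finite Sig" using limited unfolding MPG_limited_def MPG_partial_def by blast
lemma Delta_sub: "Delta \<subseteq> Q \<times> Sig \<times> Q" using limited unfolding MPG_limited_def MPG_partial_def by blast
lemma total: "q \<in> Q \<Longrightarrow> a \<in> Sig \<Longrightarrow> \<exists>q'. (q, a, q') \<in> Delta"
  using limited unfolding MPG_limited_def MPG_partial_def by blast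
lemma Obs_partition: "partition_on Q Obs" using limited unfolding MPG_limited_def MPG_partial_def by blast
lemma initial_obs: "{qI} \<in> Obs" using limited unfolding MPG_limited_def by blast

lemma Obs_sub: "o' \<in> Obs \<Longrightarrow> o' \<subseteq> Q" using partition_onD1[OF Obs_partition] by blast
lemma Obs_ne: "o' \<in> Obs \<Longrightarrow> o' \<noteq> {}" using partition_onD3[OF Obs_partition] by blast
lemma Obs_cover: "q \<in> Q \<Longrightarrow> \<exists>o'\<in>Obs. q \<in> o'" using partition_onD1[OF Obs_partition] by blast
lemma Obs_eq: "o1 \<in> Obs \<Longrightarrow> o2 \<in> Obs \<Longrightarrow> q \<in> o1 \<Longrightarrow> q \<in> o2 \<Longrightarrow> o1 = o2"
  using partition_onD2[OF Obs_partition] unfolding disjoint_def by blast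
lemma finite_Obs: "finite Obs"
proof -
  have "Obs \<subseteq> Pow Q" using Obs_sub by blast
  thus ?thesis using finite_Q by (meson finite_Pow_iff finite_subset)
qed

lemma play_obs0: "is_play qI Delta Obs obs act \<Longrightarrow> obs 0 = {qI}"
  unfolding is_play_def abstract_path_def using Obs_eq[OF _ initial_obs] by blast

lemma play_Obs: "is_play qI Delta Obs obs act \<Longrightarrow> obs i \<in> Obs"
  unfolding is_play_def abstract_path_def by blast

lemma play_Sig: "is_play qI Delta Obs obs act \<Longrightarrow> act i \<in> Sig"
  unfolding is_play_def abstract_path_def using Delta_sub by blast

definition step_ok :: "'q set \<Rightarrow> 'a \<Rightarrow> 'q set \<Rightarrow> bool" where
  "step_ok o1 a o2 \<longleftrightarrow> o2 \<in> Obs \<and> (\<exists>q\<in>o1. \<exists>q'\<in>o2. (q, a, q') \<in> Delta)"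

lemma play_step: "is_play qI Delta Obs obs act \<Longrightarrow> step_ok (obs i) (act i) (obs (Suc i))"
  unfolding is_play_def abstract_path_def step_ok_def by blast

lemma step_ok_post: "step_ok o1 a o2 \<Longrightarrow> o2 \<in> Obs \<and> o2 \<inter> post Delta a o1 \<noteq> {}"
  unfolding step_ok_def post_def by blast

lemma step_ok_ex: assumes "o1 \<in> Obs" "a \<in> Sig" shows "\<exists>o2. step_ok o1 a o2"
proof -
  obtain q where q: "q \<in> o1" using Obs_ne[OF assms(1)] by blast
  have "q \<in> Q" using q Obs_sub[OF assms(1)] by blast
  then obtain q' where q': "(q, a, q') \<in> Delta" using total assms(2) by blast
  have "q' \<in> Q" using q' Delta_sub by blast
  then obtain o2 where "o2 \<in> Obs" "q' \<in> o2" using Obs_cover by blast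
  thus ?thesis unfolding step_ok_def using q q' by blast
qed

definition seg_code :: "'q list \<Rightarrow> nat" where "seg_code = to_nat_on (lists Q)"
definition seg_less :: "'q list \<Rightarrow> 'q list \<Rightarrow> bool" where "seg_less a b \<longleftrightarrow> seg_code a < seg_code b"

lemma wf_seg_less: "wf {(a, b). seg_less a b}"
proof -
  have "{(a, b). seg_less a b} = inv_image less_than seg_code" unfolding seg_less_def inv_image_def by auto
  thus ?thesis by simp
qed

lemma seg_less_trans: "seg_less a b \<Longrightarrow> seg_less b c \<Longrightarrow> seg_less a c" unfolding seg_less_def by simp
lemma seg_less_irrefl: "\<not> seg_less a a" unfolding seg_less_def by simp
lemma seg_less_total: "a \<in> lists Q \<Longrightarrow> b \<in> lists Q \<Longrightarrow> a = b \<or> seg_less a b \<or> seg_less b a"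
proof -
  assume ab: "a \<in> lists Q" "b \<in> lists Q"
  have "countable (lists Q)" using finite_Q by (simp add: countable_finite)
  hence "inj_on seg_code (lists Q)" unfolding seg_code_def by (rule inj_on_to_nat_on)
  thus ?thesis using ab unfolding seg_less_def by (metis inj_onD linorder_neqE_nat)
qed

abbreviation kbn :: "'q list list \<Rightarrow> 'q list list \<Rightarrow> bool" where "kbn \<equiv> kb seg_less"

lemma kbn_irrefl: "\<not> kbn s s" using kb_irrefl[of seg_less s] seg_less_irrefl by blast
lemma kbn_trans: "kbn s t \<Longrightarrow> kbn t r \<Longrightarrow> kbn s r" using kb_trans[of seg_less s t r] seg_less_trans by blast

abbreviation valid :: "(nat \<Rightarrow> 'q set) \<Rightarrow> (nat \<Rightarrow> 'a) \<Rightarrow> 'q list list \<Rightarrow> bool" where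
  "valid \<equiv> loss_witness qI Delta w"

definition witnesses_upto :: "(nat \<Rightarrow> 'q set) \<Rightarrow> (nat \<Rightarrow> 'a) \<Rightarrow> nat \<Rightarrow> 'q list list set" where
  "witnesses_upto ob ac n = {v. wlen v \<le> n \<and> valid ob ac v}"

lemma loss_witness_states:
  assumes v: "valid ob ac v" and obQ: "\<And>i. ob i \<subseteq> Q"
  shows "set (concat v) \<subseteq> Q"
proof
  fix x assume "x \<in> set (concat v)"
  then obtain j where j: "j < length (concat v)" "concat v ! j = x" by (metis in_set_conv_nth)
  have "witness_path qI v ! Suc j = x" unfolding witness_path_def using j by simp
  moreover have "Suc j \<le> wlen v" using j unfolding wlen_def by simp
  ultimately have "x \<in> ob (Suc j)" using v unfolding loss_witness_def by metis
  thus "x \<in> Q" using obQ by blast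
qed

lemma loss_witness_segment: assumes "valid ob ac v" "\<And>i. ob i \<subseteq> Q" "s \<in> set v" shows "s \<in> lists Q"
  using loss_witness_states[OF assms(1,2)] assms(3) by auto

lemma finite_witnesses_upto:
  assumes obQ: "\<And>i. ob i \<subseteq> Q"
  shows "finite (witnesses_upto ob ac n)"
proof -
  let ?S = "{s. set s \<subseteq> Q \<and> length s \<le> n}"
  have fS: "finite ?S" using finite_lists_length_le[OF finite_Q] .
  have "witnesses_upto ob ac n \<subseteq> {v. set v \<subseteq> ?S \<and> length v \<le> n}"
  proof
    fix v assume "v \<in> witnesses_upto ob ac n"
    hence v: "valid ob ac v" "wlen v \<le> n" unfolding witnesses_upto_def by auto
    have ne: "\<forall>s\<in>set v. s \<noteq> []" using v(1) unfolding loss_witness_def by blast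
    have "length v \<le> n" using length_le_concat[OF ne] v(2) unfolding wlen_def by simp
    moreover have "set v \<subseteq> ?S"
    proof
      fix s assume s: "s \<in> set v"
      have "length s \<le> n" using mem_concat_length[OF s] v(2) unfolding wlen_def by simp
      moreover have "set s \<subseteq> Q" using loss_witness_segment[OF v(1) obQ s] by auto
      ultimately show "s \<in> ?S" by simp
    qed
    ultimately show "v \<in> {v. set v \<subseteq> ?S \<and> length v \<le> n}" by simp
  qed
  moreover have "finite {v. set v \<subseteq> ?S \<and> length v \<le> n}" using finite_lists_length_le[OF fS] .
  ultimately show ?thesis by (rule finite_subset)
qed

lemma kbn_total_on_witnesses:
  assumes "valid ob ac v" "valid ob ac v'" "\<And>i. ob i \<subseteq> Q" "v \<noteq> v'"
  shows "kbn v v' \<or> kbn v' v"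
proof (rule kb_total[of "lists Q" seg_less])
  show "\<And>a b. a \<in> lists Q \<Longrightarrow> b \<in> lists Q \<Longrightarrow> a = b \<or> seg_less a b \<or> seg_less b a" by (rule seg_less_total)
  show "set v \<subseteq> lists Q" using loss_witness_segment[OF assms(1,3)] by blast
  show "set v' \<subseteq> lists Q" using loss_witness_segment[OF assms(2,3)] by blast
  show "v \<noteq> v'" by fact
qed

lemma countable_loss_witnesses:
  assumes "\<And>i. ob i \<subseteq> Q"
  shows "countable {v. valid ob ac v}"
proof -
  have "{v. valid ob ac v} \<subseteq> lists (lists Q)"
  proof
    fix v assume "v \<in> {v. valid ob ac v}"
    hence "valid ob ac v" by simp
    thus "v \<in> lists (lists Q)" using loss_witness_segment[of ob ac v] assms by blast
  qed
  moreover have "countable (lists (lists Q))" using finite_Q by (simp add: countable_finite)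
  ultimately show ?thesis by (rule countable_subset)
qed

text \<open>In round n of the auxiliary game Eve plays an action together with a labelling of
  witnesses by points of K, and Adam answers with an observation. Only the labels of
  witnesses of length exactly n are taken from the labelling of round n, so every
  witness is labelled once, as soon as it can be recognised. Eve loses as soon as Adam
  has moved legally and her action is illegal or her labels of the witnesses seen so far
  are not Kleene-Brouwer monotone; this is an open condition for Adam.\<close>

definition hist_obs :: "('a, 'q, 'u) aux_hist \<Rightarrow> 'q set list" where
  "hist_obs h = {qI} # map snd h"

definition hist_acts :: "('a, 'q, 'u) aux_hist \<Rightarrow> 'a list" where
  "hist_acts h = map (\<lambda>x. fst (fst x)) h"

definition hist_witnesses :: "('a, 'q, 'u) aux_hist \<Rightarrow> 'q list list set" where
  "hist_witnesses h = witnesses_upto (\<lambda>i. hist_obs h ! i) (\<lambda>i. hist_acts h ! i) (length h)"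

definition hist_label :: "('a, 'q, 'u) aux_hist \<Rightarrow> ('q list list \<Rightarrow> 'u) \<Rightarrow> 'q list list \<Rightarrow> 'u" where
  "hist_label h g v = (if wlen v < length h then snd (fst (h ! wlen v)) v else g v)"

definition adam_legal :: "('a, 'q, 'u) aux_hist \<Rightarrow> bool" where
  "adam_legal h \<longleftrightarrow> (\<forall>i<length h. step_ok (hist_obs h ! i) (hist_acts h ! i) (hist_obs h ! Suc i))"

definition labels_monotone :: "('a, 'q, 'u) aux_hist \<Rightarrow> ('q list list \<Rightarrow> 'u) \<Rightarrow> bool" where
  "labels_monotone h g \<longleftrightarrow>
     (\<forall>v\<in>hist_witnesses h. \<forall>v'\<in>hist_witnesses h. kbn v v' \<longrightarrow> lt (hist_label h g v) (hist_label h g v'))"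

definition eve_loses_at :: "('a, 'q, 'u) aux_hist \<Rightarrow> ('a, 'q, 'u) aux_move \<Rightarrow> bool" where
  "eve_loses_at h e \<longleftrightarrow> adam_legal h \<and> (fst e \<notin> Sig \<or> \<not> labels_monotone h (snd e))"

lemma witnesses_upto_cong:
  assumes "\<And>i. i \<le> n \<Longrightarrow> ob i = ob' i" "\<And>i. i < n \<Longrightarrow> ac i = ac' i"
  shows "witnesses_upto ob ac n = witnesses_upto ob' ac' n"
  unfolding witnesses_upto_def using loss_witness_cong[of _ ob ob' ac ac'] assms by (auto simp del: wlen_def)

lemma hist_obs_append: "i \<le> length h \<Longrightarrow> hist_obs (h @ h') ! i = hist_obs h ! i"
  unfolding hist_obs_def by (cases i) (auto simp: nth_append)
lemma hist_acts_append: "i < length h \<Longrightarrow> hist_acts (h @ h') ! i = hist_acts h ! i"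
  unfolding hist_acts_def by (auto simp: nth_append)

lemma adam_legal_prefix: "adam_legal (h @ h') \<Longrightarrow> adam_legal h"
  unfolding adam_legal_def using hist_obs_append hist_acts_append by (metis Suc_leI less_imp_le_nat trans_less_add1 length_append)

lemma adam_legal_snoc: "adam_legal (h @ [x]) \<longleftrightarrow> adam_legal h \<and> step_ok (hist_obs h ! length h) (fst (fst x)) (snd x)"
proof -
  have o1: "hist_obs (h @ [x]) ! length h = hist_obs h ! length h" by (rule hist_obs_append) simp
  have o2: "hist_obs (h @ [x]) ! Suc (length h) = snd x" unfolding hist_obs_def by (simp add: nth_append)
  have a2: "hist_acts (h @ [x]) ! length h = fst (fst x)" unfolding hist_acts_def by (simp add: nth_append)
  have "(\<forall>i<Suc (length h). step_ok (hist_obs (h @ [x]) ! i) (hist_acts (h @ [x]) ! i) (hist_obs (h @ [x]) ! Suc i)) \<longleftrightarrow>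
        (\<forall>i<length h. step_ok (hist_obs (h @ [x]) ! i) (hist_acts (h @ [x]) ! i) (hist_obs (h @ [x]) ! Suc i)) \<and>
        step_ok (hist_obs (h @ [x]) ! length h) (hist_acts (h @ [x]) ! length h) (hist_obs (h @ [x]) ! Suc (length h))"
    by (auto simp: less_Suc_eq)
  moreover have "(\<forall>i<length h. step_ok (hist_obs (h @ [x]) ! i) (hist_acts (h @ [x]) ! i) (hist_obs (h @ [x]) ! Suc i)) \<longleftrightarrow> adam_legal h"
    unfolding adam_legal_def using hist_obs_append[of _ h "[x]"] hist_acts_append[of _ h "[x]"] by (auto simp: Suc_leI)
  ultimately show ?thesis unfolding adam_legal_def using o1 o2 a2 by simp
qed

primrec aux_history :: "(('a, 'q, 'u) aux_hist \<Rightarrow> ('a, 'q, 'u) aux_move) \<Rightarrow> (nat \<Rightarrow> 'q set) \<Rightarrow> nat \<Rightarrow> ('a, 'q, 'u) aux_hist" where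
  "aux_history \<sigma> ob 0 = []"
| "aux_history \<sigma> ob (Suc n) = aux_history \<sigma> ob n @ [(\<sigma> (aux_history \<sigma> ob n), ob (Suc n))]"

lemma aux_history_length: "length (aux_history \<sigma> ob n) = n" by (induction n) auto

lemma aux_history_nth: "j < n \<Longrightarrow> aux_history \<sigma> ob n ! j = (\<sigma> (aux_history \<sigma> ob j), ob (Suc j))"
  by (induction n) (auto simp: nth_append aux_history_length less_Suc_eq)

lemma aux_history_cong: "(\<And>i. i \<le> n \<Longrightarrow> ob i = ob' i) \<Longrightarrow> aux_history \<sigma> ob n = aux_history \<sigma> ob' n"
  by (induction n) auto

lemma run_aux_history: "run \<sigma> (\<lambda>h e. ob (Suc (length h))) [] n = aux_history \<sigma> ob n"
  by (induction n) (auto simp: aux_history_length)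

lemma hist_obs_aux_history: assumes "ob 0 = {qI}" "i \<le> n" shows "hist_obs (aux_history \<sigma> ob n) ! i = ob i"
proof (cases i)
  case 0 then show ?thesis using assms unfolding hist_obs_def by simp
next
  case (Suc j)
  hence "j < n" using assms by simp
  thus ?thesis unfolding hist_obs_def Suc using aux_history_nth[of j n] by (simp add: aux_history_length)
qed

lemma hist_acts_aux_history: "i < n \<Longrightarrow> hist_acts (aux_history \<sigma> ob n) ! i = fst (\<sigma> (aux_history \<sigma> ob i))"
  unfolding hist_acts_def using aux_history_nth[of i n] by (simp add: aux_history_length)

definition some_action :: 'a where "some_action = (SOME a. a \<in> Sig)"

definition eve_strategy_of :: "(('a, 'q, 'u) aux_hist \<Rightarrow> ('a, 'q, 'u) aux_move) \<Rightarrow> 'q set list \<Rightarrow> 'a list \<Rightarrow> 'a" where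
  "eve_strategy_of \<sigma> os as =
     (let e = fst (\<sigma> (aux_history \<sigma> (\<lambda>i. os ! i) (length os - 1))) in if e \<in> Sig then e else some_action)"

lemma eve_strategy_eve_strategy_of: "eve_strategy qI Sig Delta Obs (eve_strategy_of \<sigma>)"
  unfolding eve_strategy_def
proof (intro ballI, clarify)
  fix os as assume "(os, as) \<in> Prefs qI Delta Obs"
  then obtain obs act where "is_play qI Delta Obs obs act" unfolding Prefs_def by blast
  hence "act 0 \<in> Sig" by (rule play_Sig)
  hence "some_action \<in> Sig" unfolding some_action_def by (rule someI)
  thus "eve_strategy_of \<sigma> os as \<in> Sig" unfolding eve_strategy_of_def Let_def by auto
qed

lemma eve_strategy_of_replays:
  assumes E: "eve_avoids eve_loses_at [] \<sigma>" and P: "is_play qI Delta Obs obs act"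
    and C: "consistent_Eve (eve_strategy_of \<sigma>) obs act"
  shows "adam_legal (aux_history \<sigma> obs n) \<and> (\<forall>j<n. act j = fst (\<sigma> (aux_history \<sigma> obs j)))"
proof (induction n)
  case 0 then show ?case unfolding adam_legal_def by simp
next
  case (Suc n)
  let ?B = "aux_history \<sigma> obs"
  have "\<not> eve_loses_at (?B n) (\<sigma> (?B n))"
    using E run_aux_history[of \<sigma> obs n] unfolding eve_avoids_def by metis
  hence in_Sig: "fst (\<sigma> (?B n)) \<in> Sig" using Suc.IH unfolding eve_loses_at_def by blast
  have "aux_history \<sigma> (\<lambda>i. map obs [0..<Suc n] ! i) n = ?B n"
    by (rule aux_history_cong) (simp add: nth_map_upt del: upt_Suc)
  hence act_n: "act n = fst (\<sigma> (?B n))"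
    using C in_Sig unfolding consistent_Eve_def eve_strategy_of_def by (simp add: Let_def)
  have "hist_obs (?B n) ! length (?B n) = obs n"
    using hist_obs_aux_history[of obs n n \<sigma>, OF play_obs0[OF P]] by (simp add: aux_history_length)
  hence "adam_legal (?B (Suc n))" using Suc.IH play_step[OF P, of n] act_n by (simp add: adam_legal_snoc)
  moreover have "\<forall>j<Suc n. act j = fst (\<sigma> (?B j))" using Suc.IH act_n by (auto simp: less_Suc_eq)
  ultimately show ?case by simp
qed

text \<open>Collecting the labels Eve assigns along a play in which she never loses gives a
  Kleene-Brouwer monotone map of the play's witness tree into K, so the tree has no branch.\<close>

lemma eve_wins_if_aux_eve_avoids:
  assumes E: "eve_avoids eve_loses_at [] \<sigma>"
  shows "eve_wins qI Sig Delta w Obs"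
  unfolding eve_wins_def
proof (intro exI[of _ "eve_strategy_of \<sigma>"] conjI allI impI eve_strategy_eve_strategy_of)
  fix obs act assume "is_play qI Delta Obs obs act \<and> consistent_Eve (eve_strategy_of \<sigma>) obs act"
  hence P: "is_play qI Delta Obs obs act" and C: "consistent_Eve (eve_strategy_of \<sigma>) obs act" by auto
  have ob0: "obs 0 = {qI}" using play_obs0[OF P] .
  let ?B = "aux_history \<sigma> obs"
  note replay = eve_strategy_of_replays[OF E P C]
  have monotone: "labels_monotone (?B n) (snd (\<sigma> (?B n)))" for n
    using E run_aux_history[of \<sigma> obs n] replay[of n] unfolding eve_avoids_def eve_loses_at_def by metis
  have witnesses: "hist_witnesses (?B n) = witnesses_upto obs act n" for n
    unfolding hist_witnesses_def aux_history_length
    by (rule witnesses_upto_cong) (use hist_obs_aux_history[of obs _ n \<sigma>, OF ob0] hist_acts_aux_history replay in auto)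
  define A where "A v = snd (\<sigma> (?B (wlen v))) v" for v
  have label: "hist_label (?B n) (snd (\<sigma> (?B n))) v = A v" if "wlen v \<le> n" for v n
  proof (cases "wlen v < n")
    case True then show ?thesis
      unfolding hist_label_def A_def using aux_history_nth[of "wlen v" n] by (simp add: aux_history_length)
  next
    case False then have "wlen v = n" using that by simp
    then show ?thesis unfolding hist_label_def A_def by (simp add: aux_history_length)
  qed
  have "lt (A v) (A v')" if "v \<in> {v. valid obs act v}" "v' \<in> {v. valid obs act v}" "kbn v v'" for v v'
  proof -
    let ?n = "max (wlen v) (wlen v')"
    have "v \<in> hist_witnesses (?B ?n)" "v' \<in> hist_witnesses (?B ?n)"
      using that unfolding witnesses witnesses_upto_def by auto
    hence "lt (hist_label (?B ?n) (snd (\<sigma> (?B ?n))) v) (hist_label (?B ?n) (snd (\<sigma> (?B ?n))) v')"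
      using monotone[of ?n] that(3) unfolding labels_monotone_def by blast
    thus ?thesis using label[of v ?n] label[of v' ?n] by simp
  qed
  then have "\<not> has_branch {v. valid obs act v}"
    by (rule no_branch_if_kb_embeds[OF lt_wf])
  thus "winning_Eve_play Delta w obs act" using winning_Eve_play_iff_no_branch[of obs qI Delta w act, OF ob0] by simp
qed

definition some_point :: 'u where "some_point = (SOME x. x \<in> K)"

definition kb_sorted :: "'q list list set \<Rightarrow> 'q list list list" where
  "kb_sorted V = (SOME vs. set vs = V \<and> distinct vs \<and> sorted_wrt kbn vs)"

text \<open>A list xs of points of K labels the witnesses of length at most n along their
  Kleene-Brouwer enumeration; adam_colour is Adam's auxiliary reply to the resulting
  history, as a function of the observed prefix and Eve's next action. On a Rowbottom
  set H it depends only on the length of xs when xs is increasing, which lets Adam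
  answer in the original game without knowing any labels.\<close>

definition label_of :: "(nat \<Rightarrow> 'q set) \<Rightarrow> (nat \<Rightarrow> 'a) \<Rightarrow> nat \<Rightarrow> 'u list \<Rightarrow> nat \<Rightarrow> 'q list list \<Rightarrow> 'u" where
  "label_of ob ac n xs i v =
     (if v \<in> witnesses_upto ob ac i then xs ! first_index (kb_sorted (witnesses_upto ob ac n)) v else some_point)"

definition history_of :: "(nat \<Rightarrow> 'q set) \<Rightarrow> (nat \<Rightarrow> 'a) \<Rightarrow> nat \<Rightarrow> 'u list \<Rightarrow> ('a, 'q, 'u) aux_hist" where
  "history_of ob ac n xs = map (\<lambda>i. ((ac i, label_of ob ac n xs i), ob (Suc i))) [0..<n]"

definition adam_colour ::
  "(('a, 'q, 'u) aux_hist \<Rightarrow> ('a, 'q, 'u) aux_move \<Rightarrow> 'q set) \<Rightarrow> 'q set list \<times> 'a list \<times> 'a \<Rightarrow> 'u list \<Rightarrow> 'q set" where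
  "adam_colour \<tau> p xs = (case p of (os, as, a) \<Rightarrow>
     (let o' = \<tau> (history_of (\<lambda>i. os ! i) (\<lambda>i. as ! i) (length as) xs)
                  (a, label_of (\<lambda>i. os ! i) (\<lambda>i. as ! i) (length as) xs (length as))
      in if o' \<in> Obs then o' else {}))"

definition adam_queries :: "('q set list \<times> 'a list \<times> 'a) set" where
  "adam_queries = lists Obs \<times> lists Sig \<times> Sig"

definition homogeneous :: "(('a, 'q, 'u) aux_hist \<Rightarrow> ('a, 'q, 'u) aux_move \<Rightarrow> 'q set) \<Rightarrow> 'u set \<Rightarrow> bool" where
  "homogeneous \<tau> H \<longleftrightarrow> (\<forall>p\<in>adam_queries. \<forall>n. \<exists>col.
     \<forall>xs. length xs = n \<and> sorted_wrt lt xs \<and> set xs \<subseteq> H \<longrightarrow> adam_colour \<tau> p xs = col)"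

definition homogeneous_colour ::
  "(('a, 'q, 'u) aux_hist \<Rightarrow> ('a, 'q, 'u) aux_move \<Rightarrow> 'q set) \<Rightarrow> 'u set \<Rightarrow> 'q set list \<times> 'a list \<times> 'a \<Rightarrow> nat \<Rightarrow> 'q set" where
  "homogeneous_colour \<tau> H p m =
     (SOME col. \<forall>xs. length xs = m \<and> sorted_wrt lt xs \<and> set xs \<subseteq> H \<longrightarrow> adam_colour \<tau> p xs = col)"

definition adam_strategy_of ::
  "(('a, 'q, 'u) aux_hist \<Rightarrow> ('a, 'q, 'u) aux_move \<Rightarrow> 'q set) \<Rightarrow> 'u set \<Rightarrow> 'q set list \<Rightarrow> 'a list \<Rightarrow> 'a \<Rightarrow> 'q set" where
  "adam_strategy_of \<tau> H os as a =
     (let col = homogeneous_colour \<tau> H (os, as, a) (card (witnesses_upto (\<lambda>i. os ! i) (\<lambda>i. as ! i) (length as)))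
      in if step_ok (last os) a col then col else (SOME o'. step_ok (last os) a o'))"

lemma label_of_cong:
  assumes "\<And>i. i \<le> n \<Longrightarrow> ob i = ob' i" "\<And>i. i < n \<Longrightarrow> ac i = ac' i" "i \<le> n"
  shows "label_of ob ac n xs i = label_of ob' ac' n xs i"
proof -
  have "witnesses_upto ob ac i = witnesses_upto ob' ac' i" using assms by (intro witnesses_upto_cong) auto
  moreover have "witnesses_upto ob ac n = witnesses_upto ob' ac' n" using assms by (intro witnesses_upto_cong) auto
  ultimately show ?thesis unfolding label_of_def by (simp only:)
qed

lemma history_of_cong:
  assumes "\<And>i. i \<le> n \<Longrightarrow> ob i = ob' i" "\<And>i. i < n \<Longrightarrow> ac i = ac' i"
  shows "history_of ob ac n xs = history_of ob' ac' n xs"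
  unfolding history_of_def using assms label_of_cong[OF assms] by (intro map_cong) auto

lemma witnesses_upto_prefix:
  "witnesses_upto (\<lambda>i. map obs [0..<Suc n] ! i) (\<lambda>i. map act [0..<n] ! i) n = witnesses_upto obs act n"
  by (rule witnesses_upto_cong) (simp_all add: nth_map_upt del: upt_Suc)

lemma adam_colour_prefix:
  "adam_colour \<tau> (map obs [0..<Suc n], map act [0..<n], a) xs =
     (let o' = \<tau> (history_of obs act n xs) (a, label_of obs act n xs n) in if o' \<in> Obs then o' else {})"
proof -
  have "history_of (\<lambda>i. map obs [0..<Suc n] ! i) (\<lambda>i. map act [0..<n] ! i) n xs = history_of obs act n xs"
    by (rule history_of_cong) (simp_all add: nth_map_upt del: upt_Suc)
  moreover have "label_of (\<lambda>i. map obs [0..<Suc n] ! i) (\<lambda>i. map act [0..<n] ! i) n xs n = label_of obs act n xs n"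
    by (rule label_of_cong) (simp_all add: nth_map_upt del: upt_Suc)
  ultimately show ?thesis unfolding adam_colour_def by simp
qed

lemma adam_strategy_of_prefix:
  "adam_strategy_of \<tau> H (map obs [0..<Suc n]) (map act [0..<n]) a =
     (let col = homogeneous_colour \<tau> H (map obs [0..<Suc n], map act [0..<n], a) (card (witnesses_upto obs act n))
      in if step_ok (obs n) a col then col else (SOME o'. step_ok (obs n) a o'))"
proof -
  have "last (map obs [0..<Suc n]) = obs n" by simp
  moreover have "witnesses_upto (\<lambda>i. map obs [0..<Suc n] ! i) (\<lambda>i. map act [0..<n] ! i) (length (map act [0..<n]))
      = witnesses_upto obs act n"
    by (simp only: length_map length_upt diff_zero witnesses_upto_prefix)
  ultimately show ?thesis unfolding adam_strategy_of_def by (simp only:)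
qed

lemma homogeneous_set_exists: "\<exists>H\<in>U. homogeneous \<tau> H"
proof -
  have "countable adam_queries" unfolding adam_queries_def using finite_Obs finite_Sig by (simp add: countable_finite)
  moreover have "\<forall>p\<in>adam_queries. finite (insert {} Obs) \<and> (\<forall>xs. adam_colour \<tau> p xs \<in> insert {} Obs)"
    using finite_Obs unfolding adam_colour_def by (auto simp: Let_def split: prod.splits)
  ultimately show ?thesis unfolding homogeneous_def by (rule rowbottom_countable)
qed

lemma homogeneous_colour_eq:
  assumes "homogeneous \<tau> H" "p \<in> adam_queries" "sorted_wrt lt xs" "set xs \<subseteq> H"
  shows "adam_colour \<tau> p xs = homogeneous_colour \<tau> H p (length xs)"
proof -
  have "\<exists>col. \<forall>xs'. length xs' = length xs \<and> sorted_wrt lt xs' \<and> set xs' \<subseteq> H \<longrightarrow> adam_colour \<tau> p xs' = col"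
    using assms(1,2) unfolding homogeneous_def by blast
  hence "\<forall>xs'. length xs' = length xs \<and> sorted_wrt lt xs' \<and> set xs' \<subseteq> H \<longrightarrow>
      adam_colour \<tau> p xs' = homogeneous_colour \<tau> H p (length xs)"
    unfolding homogeneous_colour_def by (rule someI_ex)
  thus ?thesis using assms(3,4) by blast
qed

lemma adam_strategy_adam_strategy_of: "adam_strategy qI Sig Delta Obs (adam_strategy_of \<tau> H)"
  unfolding adam_strategy_def
proof (intro ballI, clarify)
  fix os as a assume "(os, as) \<in> Prefs qI Delta Obs" and a: "a \<in> Sig"
  then obtain obs act n where P: "is_play qI Delta Obs obs act" and os: "os = map obs [0..<Suc n]"
    unfolding Prefs_def by blast
  have "last os \<in> Obs" using play_Obs[OF P] unfolding os by simp
  hence ex: "\<exists>o'. step_ok (last os) a o'" using step_ok_ex a by blast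
  have "step_ok (last os) a (adam_strategy_of \<tau> H os as a)"
    unfolding adam_strategy_of_def Let_def using someI_ex[OF ex] by auto
  thus "adam_strategy_of \<tau> H os as a \<in> Obs \<and> adam_strategy_of \<tau> H os as a \<inter> post Delta a (last os) \<noteq> {}"
    by (rule step_ok_post)
qed

lemma kb_monotone_labelling_exists:
  assumes H: "H \<in> U" and P: "is_play qI Delta Obs obs act" and W: "winning_Eve_play Delta w obs act"
  shows "\<exists>h. (\<forall>v. h v \<in> H) \<and> (\<forall>v v'. valid obs act v \<and> valid obs act v' \<and> kbn v v' \<longrightarrow> lt (h v) (h v'))"
proof -
  let ?T = "{v. valid obs act v}"
  have obQ: "\<And>i. obs i \<subseteq> Q" using play_Obs[OF P] Obs_sub by blast
  have "\<not> has_branch ?T" using W winning_Eve_play_iff_no_branch[of obs qI Delta w act, OF play_obs0[OF P]] by simp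
  then have "wf {(s, t). s \<in> ?T \<and> t \<in> ?T \<and> kbn s t}"
    using wf_kb_if_no_branch[OF wf_seg_less _ loss_witnesses_prefix_closed] seg_less_trans by blast
  moreover have "{(s, t). s \<in> ?T \<and> t \<in> ?T \<and> kbn s t} \<subseteq> ?T \<times> ?T" by auto
  ultimately obtain h where "\<forall>v. h v \<in> H" "\<forall>v v'. (v, v') \<in> {(s, t). s \<in> ?T \<and> t \<in> ?T \<and> kbn s t} \<longrightarrow> lt (h v) (h v')"
    using wf_countable_embeds[OF H countable_loss_witnesses[of obs act, OF obQ]] by blast
  then show ?thesis by auto
qed

lemma kb_sorted_witnesses:
  assumes "\<And>i. obs i \<subseteq> Q"
  shows "set (kb_sorted (witnesses_upto obs act n)) = witnesses_upto obs act n
    \<and> distinct (kb_sorted (witnesses_upto obs act n)) \<and> sorted_wrt kbn (kb_sorted (witnesses_upto obs act n))"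
proof -
  have "\<exists>vs. set vs = witnesses_upto obs act n \<and> distinct vs \<and> sorted_wrt kbn vs"
  proof (rule sorted_list_exists[of kbn])
    show "finite (witnesses_upto obs act n)" using finite_witnesses_upto assms by blast
    show "\<forall>a\<in>witnesses_upto obs act n. \<forall>b\<in>witnesses_upto obs act n. a \<noteq> b \<longrightarrow> kbn a b \<or> kbn b a"
      using kbn_total_on_witnesses assms unfolding witnesses_upto_def by blast
  qed (fact kbn_irrefl, erule (1) kbn_trans)
  thus ?thesis unfolding kb_sorted_def by (rule someI_ex)
qed

text \<open>Given a Kleene-Brouwer monotone labelling h of the witnesses of a play, Eve can
  shadow the play in the auxiliary game, labelling each witness by h.\<close>

definition labels_along :: "('q list list \<Rightarrow> 'u) \<Rightarrow> (nat \<Rightarrow> 'q set) \<Rightarrow> (nat \<Rightarrow> 'a) \<Rightarrow> nat \<Rightarrow> 'q list list \<Rightarrow> 'u" where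
  "labels_along h obs act i v = (if v \<in> witnesses_upto obs act i then h v else some_point)"

definition history_along :: "('q list list \<Rightarrow> 'u) \<Rightarrow> (nat \<Rightarrow> 'q set) \<Rightarrow> (nat \<Rightarrow> 'a) \<Rightarrow> nat \<Rightarrow> ('a, 'q, 'u) aux_hist" where
  "history_along h obs act n = map (\<lambda>i. ((act i, labels_along h obs act i), obs (Suc i))) [0..<n]"

lemma sorted_labels:
  fixes obs :: "nat \<Rightarrow> 'q set" and act :: "nat \<Rightarrow> 'a" and h :: "'q list list \<Rightarrow> 'u"
  assumes obQ: "\<And>i. obs i \<subseteq> Q"
    and mono: "\<forall>v v'. valid obs act v \<and> valid obs act v' \<and> kbn v v' \<longrightarrow> lt (h v) (h v')"
  shows "sorted_wrt lt (map h (kb_sorted (witnesses_upto obs act n)))"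
    and "length (map h (kb_sorted (witnesses_upto obs act n))) = card (witnesses_upto obs act n)"
    and "\<And>i. i \<le> n \<Longrightarrow> label_of obs act n (map h (kb_sorted (witnesses_upto obs act n))) i = labels_along h obs act i"
proof -
  define xs where "xs = map h (kb_sorted (witnesses_upto obs act n))"
  note sorted = kb_sorted_witnesses[of obs act n, OF obQ]
  have "sorted_wrt (\<lambda>a b. lt (h a) (h b)) (kb_sorted (witnesses_upto obs act n))"
    by (rule sorted_wrt_mono_rel[of _ kbn]) (use sorted mono in \<open>auto simp: witnesses_upto_def\<close>)
  then show "sorted_wrt lt (map h (kb_sorted (witnesses_upto obs act n)))" unfolding sorted_wrt_map .
  show "length (map h (kb_sorted (witnesses_upto obs act n))) = card (witnesses_upto obs act n)"
    using sorted distinct_card by fastforce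
  fix i assume i: "i \<le> n"
  show "label_of obs act n (map h (kb_sorted (witnesses_upto obs act n))) i = labels_along h obs act i"
    unfolding xs_def[symmetric]
  proof
    fix v
    show "label_of obs act n xs i v = labels_along h obs act i v"
    proof (cases "v \<in> witnesses_upto obs act i")
      case True
      hence "v \<in> set (kb_sorted (witnesses_upto obs act n))" using sorted i unfolding witnesses_upto_def by auto
      from first_index[OF this] have "xs ! first_index (kb_sorted (witnesses_upto obs act n)) v = h v"
        unfolding xs_def by simp
      thus ?thesis using True unfolding label_of_def labels_along_def by simp
    qed (simp add: label_of_def labels_along_def)
  qed
qed

lemma hist_obs_history_along: "obs 0 = {qI} \<Longrightarrow> i \<le> n \<Longrightarrow> hist_obs (history_along h obs act n) ! i = obs i"
  unfolding hist_obs_def history_along_def by (cases i) auto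

lemma eve_never_loses_along:
  assumes P: "is_play qI Delta Obs obs act"
    and mono: "\<forall>v v'. valid obs act v \<and> valid obs act v' \<and> kbn v v' \<longrightarrow> lt (h v) (h v')"
  shows "\<not> eve_loses_at (history_along h obs act n) (act n, labels_along h obs act n)"
proof -
  let ?X = "history_along h obs act n"
  have len: "length ?X = n" by (simp add: history_along_def)
  have witnesses: "hist_witnesses ?X = witnesses_upto obs act n"
    unfolding hist_witnesses_def len
  proof (rule witnesses_upto_cong)
    show "\<And>i. i \<le> n \<Longrightarrow> hist_obs ?X ! i = obs i"
      using hist_obs_history_along[of obs, OF play_obs0[OF P]] by simp
    show "\<And>i. i < n \<Longrightarrow> hist_acts ?X ! i = act i"
      by (simp add: history_along_def hist_acts_def)
  qed
  have label: "hist_label ?X (labels_along h obs act n) v = h v" if "v \<in> witnesses_upto obs act n" for v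
  proof -
    have "v \<in> witnesses_upto obs act (wlen v)" using that unfolding witnesses_upto_def by simp
    moreover have "wlen v \<le> n" using that unfolding witnesses_upto_def by simp
    ultimately show ?thesis
      unfolding hist_label_def history_along_def by (auto simp: labels_along_def)
  qed
  have "labels_monotone ?X (labels_along h obs act n)"
    unfolding labels_monotone_def witnesses using label mono unfolding witnesses_upto_def by auto
  thus ?thesis using play_Sig[OF P] unfolding eve_loses_at_def by simp
qed

text \<open>Homogeneity is what makes the reply computed by adam_strategy_of from the
  observations alone agree with Adam's auxiliary reply to the shadowing history.\<close>

lemma adam_reply_along:
  assumes hom: "homogeneous \<tau> H" and P: "is_play qI Delta Obs obs act"
    and C: "consistent_Adam (adam_strategy_of \<tau> H) obs act"
    and hH: "\<forall>v. h v \<in> H"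
    and mono: "\<forall>v v'. valid obs act v \<and> valid obs act v' \<and> kbn v v' \<longrightarrow> lt (h v) (h v')"
    and legal: "step_ok (obs n) (act n) (\<tau> (history_along h obs act n) (act n, labels_along h obs act n))"
  shows "\<tau> (history_along h obs act n) (act n, labels_along h obs act n) = obs (Suc n)"
proof -
  let ?o = "\<tau> (history_along h obs act n) (act n, labels_along h obs act n)"
  let ?p = "(map obs [0..<Suc n], map act [0..<n], act n)"
  let ?xs = "map h (kb_sorted (witnesses_upto obs act n))"
  have obQ: "\<And>i. obs i \<subseteq> Q" using play_Obs[OF P] Obs_sub by blast
  note sorted = sorted_labels[where obs=obs and act=act and h=h and n=n, OF obQ mono]
  have "history_of obs act n ?xs = history_along h obs act n"
    unfolding history_of_def history_along_def using sorted(3) by (intro map_cong) auto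
  hence "adam_colour \<tau> ?p ?xs = ?o"
    using legal sorted(3)[of n] unfolding adam_colour_prefix step_ok_def by (simp add: Let_def)
  moreover have "?p \<in> adam_queries" unfolding adam_queries_def using play_Obs[OF P] play_Sig[OF P] by auto
  moreover have "set ?xs \<subseteq> H" using hH by auto
  ultimately have "homogeneous_colour \<tau> H ?p (card (witnesses_upto obs act n)) = ?o"
    using homogeneous_colour_eq[OF hom _ sorted(1)] sorted(2) by simp
  moreover have "adam_strategy_of \<tau> H (map obs [0..<Suc n]) (map act [0..<n]) (act n) = obs (Suc n)"
    using C unfolding consistent_Adam_def by blast
  ultimately show ?thesis using legal unfolding adam_strategy_of_prefix Let_def by simp
qed

text \<open>Against a play of the original game won by Eve, Eve shadows it in the auxiliary
  game with a monotone labelling inside a homogeneous set: Adam's reply either follows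
  the play or is illegal, so she never loses.\<close>

lemma adam_wins_if_aux_adam_forces:
  assumes A: "adam_forces eve_loses_at [] \<tau>"
  shows "adam_wins qI Sig Delta w Obs"
proof -
  obtain H where H: "H \<in> U" and hom: "homogeneous \<tau> H" using homogeneous_set_exists by blast
  show ?thesis
    unfolding adam_wins_def
  proof (intro exI[of _ "adam_strategy_of \<tau> H"] conjI allI impI notI adam_strategy_adam_strategy_of)
    fix obs act assume "is_play qI Delta Obs obs act \<and> consistent_Adam (adam_strategy_of \<tau> H) obs act"
      and W: "winning_Eve_play Delta w obs act"
    hence P: "is_play qI Delta Obs obs act" and C: "consistent_Adam (adam_strategy_of \<tau> H) obs act" by auto
    obtain h where hH: "\<forall>v. h v \<in> H"
      and mono: "\<forall>v v'. valid obs act v \<and> valid obs act v' \<and> kbn v v' \<longrightarrow> lt (h v) (h v')"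
      using kb_monotone_labelling_exists[OF H P W] by blast
    define \<sigma> where "\<sigma> X = (act (length X), labels_along h obs act (length X))" for X :: "('a, 'q, 'u) aux_hist"
    let ?run = "run \<sigma> \<tau> []"
    have shadow: "?run n = history_along h obs act n \<or> \<not> adam_legal (?run n)" for n
    proof (induction n)
      case 0 then show ?case unfolding history_along_def by simp
    next
      case (Suc n)
      let ?X = "history_along h obs act n" and ?e = "(act n, labels_along h obs act n)"
      show ?case
      proof (cases "?run n = ?X")
        case True
        have \<sigma>X: "\<sigma> ?X = ?e" unfolding \<sigma>_def history_along_def by simp
        have run_Suc: "?run (Suc n) = ?X @ [(?e, \<tau> ?X ?e)]" using True by (simp add: \<sigma>X)
        show ?thesis
        proof (cases "\<tau> ?X ?e = obs (Suc n)")
          case True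
          then show ?thesis unfolding run_Suc history_along_def by simp
        next
          case False
          have "hist_obs ?X ! length ?X = obs n"
            using hist_obs_history_along[of obs, OF play_obs0[OF P], of n n] by (simp add: history_along_def)
          then have "\<not> adam_legal (?run (Suc n))"
            using adam_reply_along[OF hom P C hH mono] False unfolding run_Suc adam_legal_snoc by auto
          then show ?thesis by simp
        qed
      next
        case False
        hence "\<not> adam_legal (?run n)" using Suc.IH by simp
        hence "\<not> adam_legal (?run (Suc n))" using adam_legal_prefix by (metis run.simps(2))
        then show ?thesis by simp
      qed
    qed
    have "\<not> eve_loses_at (?run n) (\<sigma> (?run n))" for n
    proof (cases "?run n = history_along h obs act n")
      case True
      have "\<sigma> (history_along h obs act n) = (act n, labels_along h obs act n)"
        unfolding \<sigma>_def history_along_def by simp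
      then show ?thesis using eve_never_loses_along[OF P mono, of n] True by simp
    qed (use shadow in \<open>auto simp: eve_loses_at_def\<close>)
    thus False using A unfolding adam_forces_def by blast
  qed
qed

theorem determined: "eve_wins qI Sig Delta w Obs \<or> adam_wins qI Sig Delta w Obs"
  using gale_stewart[of eve_loses_at] eve_wins_if_aux_eve_avoids adam_wins_if_aux_adam_forces by blast

end

lemma measurable_cardinal_normal_ultrafilter:
  assumes "measurable_cardinal K"
  shows "\<exists>U. normal_ultrafilter K U"
proof -
  obtain U where "ultrafilter_on K U" "\<forall>x\<in>K. {x} \<notin> U" "\<forall>F. F \<subseteq> U \<and> F \<noteq> {} \<and> F \<prec> K \<longrightarrow> \<Inter>F \<in> U"
    using assms unfolding measurable_cardinal_def by (elim conjE exE)
  moreover have "uncountable K" using assms unfolding measurable_cardinal_def by (elim conjE)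
  ultimately have "measurable_ultrafilter K U" unfolding measurable_ultrafilter_def by (intro conjI)
  then have "normal_ultrafilter K (measurable_ultrafilter.normal_U K U)"
    by (rule measurable_ultrafilter.normal_ultrafilter_normal_U)
  then show ?thesis by (rule exI)
qed

theorem theorem2:
  fixes Q :: "'q set" and qI :: 'q and Sig :: "'a set"
    and Delta :: "('q \<times> 'a \<times> 'q) set" and w :: "'q \<times> 'a \<times> 'q \<Rightarrow> int"
    and Obs :: "'q set set" and K :: "'u set"
  assumes "measurable_cardinal K"
    and "MPG_limited Q qI Sig Delta Obs"
  shows "eve_wins qI Sig Delta w Obs \<or> adam_wins qI Sig Delta w Obs"
proof -
  obtain U where "normal_ultrafilter K U" using measurable_cardinal_normal_ultrafilter[OF assms(1)] by blast
  then interpret limited_game K U Q qI Sig Delta w Obs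
    using assms(2) by (simp add: limited_game_def limited_game_axioms_def)
  show ?thesis by (rule determined)
qed

end
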